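(* Let $0<\varepsilon\le\pi/39$ and let $G=(V,E)$ be an $\varepsilon$-regular graph with $N=\#V$ such that $\max_{\gamma\in\Gamma(G)}\theta_{\rm ex}(\gamma)<\frac{\pi}{10}-\frac75\varepsilon$. Then: (i) $\sum_{s\in\mathcal{S}}l(s)=2N$; (ii) $F_{{\rm bond},\beta}(G)=2(1-\beta)\#\mathcal{S}_{\rm int}+2\#\mathcal{S}_{\rm no}$; (iii) each $x\in V$ is contained in exactly two elements of $\mathcal{S}$, say $s(x)$ and $s^\perp(x)$, and $s^\perp(x)\in\mathcal{S}^\perp(s(x))$.
   Context: Substrate $\mathcal{L}^-=\mathbb{Z}^2\cap\{x_2\le0\}$; fix $\beta>0$, $r_0\in(1,\sqrt2)$. $\theta_{x,y,z}\in[0,2\pi)$ is the clockwise angle between $x-y$ and $z-y$. For a graph $G=(V,E)$ with $V\subset\{x_2>0\}$ finite: $\mathcal{N}(x,E)=\{y\in V:\{x,y\}\in E\}$, $\mathcal{N}_{\mathcal{L}^-}(x)=\{y\in\mathcal{L}^-:|x-y|\le r_0\}$. Bond energy: $F_{{\rm bond},\beta}(G)=\sum_{x\in V}\big(4-\#\mathcal{N}(x,E)-2\beta\#\mathcal{N}_{\mathcal{L}^-}(x)\big)$. Bonds of $G$: edges of $E$, pairs $\{x,z\}$ with $x\in V$, $z\in\mathcal{N}_{\mathcal{L}^-}(x)$, and pairs $\{z,z'\}\subset\mathcal{L}^-$ with $|z-z'|=1$; a bond angle is $\theta_{x,y,z}$ with $x,y,z$ pairwise distinct in $V\cup\mathcal{L}^-$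 and $\{x,y\},\{y,z\}$ bonds. $G$ is $\varepsilon$-regular if $|x-y|\ge1-\varepsilon$ for all distinct $x,y\in V\cup\mathcal{L}^-$ and every bond angle lies in $[\pi/2-\varepsilon,\pi/2+\varepsilon]\cup[\pi-\varepsilon,\pi+\varepsilon]\cup[3\pi/2-\varepsilon,3\pi/2+\varepsilon]$. Straight paths: $\gamma=(x_1,\dots,x_n)$, $x_i\in V$, $n\ge2$, with $\{x_i,x_{i+1}\}\in E$, $\theta_{x_{i+1},x_i,x_{i-1}}\in[\pi-\varepsilon,\pi+\varepsilon]$ for $2\le i\le n-1$, edges $\{x_i,x_{i+1}\}$ pairwise distinct; $\Gamma(G)$ is their set. Angle excess: $\theta_{\rm ex}(\gamma)=\sum_{i=2}^{n-1}|\theta_{x_{i+1},x_i,x_{i-1}}-\pi|$. $\mathcal{S}_\Gamma$: straight paths maximal with respect to inclusion as consecutive subpaths (paths identified with reversals). $V_i=\{x\in V:\#\mathcal{N}(x,E)=i\}$, $V_2^\pi=\{x\in V_2:\theta_{x_1,x,x_2}\in[\pi-\varepsilon,\pi+\varepsilon]$ where $\mathcal{N}(x,E)=\{x_1,x_2\}\}$. Strata $\mathcal{S}$: multiset of the elements of $\mathcal{S}_\Gamma$, two copies of $(x)$ for each $x\in V_0$, one copy of $(x)$ for each $x\in V_1\cup V_2^\pi$. $s=(x_1,\dots,x_n)\in\mathcal{S}_\Gamma$ is interacting if there is $z_0\in\mathcal{N}_{\mathcal{L}^-}(x_1)$ with $\theta_{z_0,x_1,x_2}\in[\pi-\varepsilon,\pi+\varepsilon]$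 or $z_{n+1}\in\mathcal{N}_{\mathcal{L}^-}(x_n)$ with $\theta_{x_{n-1},x_n,z_{n+1}}\in[\pi-\varepsilon,\pi+\varepsilon]$. $\mathcal{S}_{\rm int}$: interacting elements of $\mathcal{S}_\Gamma$, one copy of $(x)$ for each $x\in V_0\cup V_2^\pi$ with $\mathcal{N}_{\mathcal{L}^-}(x)\ne\emptyset$, and $(x)$ for each $x\in V_1$ with $\mathcal{N}_{\mathcal{L}^-}(x)\ne\emptyset$ not on any interacting element of $\mathcal{S}_\Gamma$; $\mathcal{S}_{\rm no}=\mathcal{S}\setminus\mathcal{S}_{\rm int}$ (multiset difference). Multiset cardinalities count multiplicity. $l((x_1,\dots,x_n))=n$. $\mathcal{S}^\perp(s)$: elements of $\mathcal{S}$ other than $s$ sharing a point with $s$. *)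

theory Defs
  imports "HOL-Analysis.Analysis" "HOL-Library.Multiset" "HOL-Library.Sublist"
begin

text \<open>Points of the plane are complex numbers; the second coordinate is Im.\<close>

definition substrate :: "complex set" where
  "substrate = {Complex (of_int m) (of_int n) | m n. n \<le> 0}"

text \<open>Clockwise angle between x - y and z - y, valued in [0, 2 pi).\<close>
definition cw_angle :: "complex \<Rightarrow> complex \<Rightarrow> complex \<Rightarrow> real" where
  "cw_angle x y z = (let a = Arg ((x - y) / (z - y)) in if a < 0 then a + 2 * pi else a)"

definition nbr :: "complex set \<Rightarrow> complex set set \<Rightarrow> complex \<Rightarrow> complex set" where
  "nbr V E x = {y \<in> V. {x, y} \<in> E}"

definition nbr_sub :: "real \<Rightarrow> complex \<Rightarrow> complex set" where
  "nbr_sub r0 x = {z \<in> substrate. cmod (x - z) \<le> r0}"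

definition F_bond :: "real \<Rightarrow> real \<Rightarrow> complex set \<Rightarrow> complex set set \<Rightarrow> real" where
  "F_bond \<beta> r0 V E = (\<Sum>x\<in>V. 4 - real (card (nbr V E x)) - 2 * \<beta> * real (card (nbr_sub r0 x)))"

definition bonds :: "real \<Rightarrow> complex set \<Rightarrow> complex set set \<Rightarrow> complex set set" where
  "bonds r0 V E = E \<union> {{x, z} | x z. x \<in> V \<and> z \<in> nbr_sub r0 x}
     \<union> {{z, z'} | z z'. z \<in> substrate \<and> z' \<in> substrate \<and> cmod (z - z') = 1}"

definition regular :: "real \<Rightarrow> real \<Rightarrow> complex set \<Rightarrow> complex set set \<Rightarrow> bool" where
  "regular \<epsilon> r0 V E \<longleftrightarrow>
     (\<forall>x \<in> V \<union> substrate. \<forall>y \<in> V \<union> substrate. x \<noteq> y \<longrightarrow> cmod (x - y) \<ge> 1 - \<epsilon>) \<and>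
     (\<forall>x \<in> V \<union> substrate. \<forall>y \<in> V \<union> substrate. \<forall>z \<in> V \<union> substrate.
        x \<noteq> y \<and> y \<noteq> z \<and> x \<noteq> z \<and> {x, y} \<in> bonds r0 V E \<and> {y, z} \<in> bonds r0 V E \<longrightarrow>
        cw_angle x y z \<in> {pi/2 - \<epsilon> .. pi/2 + \<epsilon>} \<union> {pi - \<epsilon> .. pi + \<epsilon>} \<union> {3*pi/2 - \<epsilon> .. 3*pi/2 + \<epsilon>})"

definition straight_path :: "real \<Rightarrow> complex set \<Rightarrow> complex set set \<Rightarrow> complex list \<Rightarrow> bool" where
  "straight_path \<epsilon> V E \<gamma> \<longleftrightarrow> length \<gamma> \<ge> 2 \<and> set \<gamma> \<subseteq> V \<and>
     (\<forall>i. Suc i < length \<gamma> \<longrightarrow> {\<gamma> ! i, \<gamma> ! Suc i} \<in> E) \<and>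
     (\<forall>i. 0 < i \<and> Suc i < length \<gamma> \<longrightarrow>
        cw_angle (\<gamma> ! Suc i) (\<gamma> ! i) (\<gamma> ! (i - 1)) \<in> {pi - \<epsilon> .. pi + \<epsilon>}) \<and>
     (\<forall>i j. Suc i < length \<gamma> \<and> Suc j < length \<gamma> \<and> i \<noteq> j \<longrightarrow>
        {\<gamma> ! i, \<gamma> ! Suc i} \<noteq> {\<gamma> ! j, \<gamma> ! Suc j})"

definition Gamma :: "real \<Rightarrow> complex set \<Rightarrow> complex set set \<Rightarrow> complex list set" where
  "Gamma \<epsilon> V E = {\<gamma>. straight_path \<epsilon> V E \<gamma>}"

definition angle_excess :: "complex list \<Rightarrow> real" where
  "angle_excess \<gamma> = (\<Sum>i \<in> {1 ..< length \<gamma> - 1}.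
      \<bar>cw_angle (\<gamma> ! Suc i) (\<gamma> ! i) (\<gamma> ! (i - 1)) - pi\<bar>)"

text \<open>An unoriented path: a path identified with its reversal.\<close>
definition upath :: "complex list \<Rightarrow> complex list set" where
  "upath \<gamma> = {\<gamma>, rev \<gamma>}"

definition slen :: "complex list set \<Rightarrow> nat" where
  "slen s = length (SOME \<gamma>. \<gamma> \<in> s)"

definition spts :: "complex list set \<Rightarrow> complex set" where
  "spts s = (\<Union>\<gamma>\<in>s. set \<gamma>)"

definition maximal_straight :: "real \<Rightarrow> complex set \<Rightarrow> complex set set \<Rightarrow> complex list \<Rightarrow> bool" where
  "maximal_straight \<epsilon> V E \<gamma> \<longleftrightarrow> \<gamma> \<in> Gamma \<epsilon> V E \<and>
     \<not> (\<exists>\<gamma>' \<in> Gamma \<epsilon> V E. (sublist \<gamma> \<gamma>' \<or> sublist \<gamma> (rev \<gamma>')) \<and> \<not> (\<gamma>' = \<gamma> \<or> \<gamma>' = rev \<gamma>))"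

definition S_Gamma :: "real \<Rightarrow> complex set \<Rightarrow> complex set set \<Rightarrow> complex list set set" where
  "S_Gamma \<epsilon> V E = upath ` {\<gamma>. maximal_straight \<epsilon> V E \<gamma>}"

definition Vdeg :: "complex set \<Rightarrow> complex set set \<Rightarrow> nat \<Rightarrow> complex set" where
  "Vdeg V E i = {x \<in> V. card (nbr V E x) = i}"

definition V2pi :: "real \<Rightarrow> complex set \<Rightarrow> complex set set \<Rightarrow> complex set" where
  "V2pi \<epsilon> V E = {x \<in> Vdeg V E 2. \<exists>x1 x2. nbr V E x = {x1, x2} \<and>
       cw_angle x1 x x2 \<in> {pi - \<epsilon> .. pi + \<epsilon>}}"

definition strata :: "real \<Rightarrow> complex set \<Rightarrow> complex set set \<Rightarrow> complex list set multiset" where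
  "strata \<epsilon> V E = mset_set (S_Gamma \<epsilon> V E)
     + image_mset (\<lambda>x. upath [x]) (mset_set (Vdeg V E 0))
     + image_mset (\<lambda>x. upath [x]) (mset_set (Vdeg V E 0))
     + image_mset (\<lambda>x. upath [x]) (mset_set (Vdeg V E 1 \<union> V2pi \<epsilon> V E))"

definition interacting_path :: "real \<Rightarrow> real \<Rightarrow> complex list \<Rightarrow> bool" where
  "interacting_path \<epsilon> r0 \<gamma> \<longleftrightarrow>
     (\<exists>z0 \<in> nbr_sub r0 (\<gamma> ! 0). cw_angle z0 (\<gamma> ! 0) (\<gamma> ! 1) \<in> {pi - \<epsilon> .. pi + \<epsilon>}) \<or>
     (\<exists>z \<in> nbr_sub r0 (last \<gamma>).
        cw_angle (\<gamma> ! (length \<gamma> - 2)) (last \<gamma>) z \<in> {pi - \<epsilon> .. pi + \<epsilon>})"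

definition interacting :: "real \<Rightarrow> real \<Rightarrow> complex list set \<Rightarrow> bool" where
  "interacting \<epsilon> r0 s \<longleftrightarrow> (\<exists>\<gamma> \<in> s. interacting_path \<epsilon> r0 \<gamma>)"

definition strata_int :: "real \<Rightarrow> real \<Rightarrow> complex set \<Rightarrow> complex set set \<Rightarrow> complex list set multiset" where
  "strata_int \<epsilon> r0 V E = mset_set {s \<in> S_Gamma \<epsilon> V E. interacting \<epsilon> r0 s}
     + image_mset (\<lambda>x. upath [x])
         (mset_set {x \<in> Vdeg V E 0 \<union> V2pi \<epsilon> V E. nbr_sub r0 x \<noteq> {}})
     + image_mset (\<lambda>x. upath [x])
         (mset_set {x \<in> Vdeg V E 1. nbr_sub r0 x \<noteq> {} \<and>
            \<not> (\<exists>s \<in> S_Gamma \<epsilon> V E. interacting \<epsilon> r0 s \<and> x \<in> spts s)})"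

definition strata_no :: "real \<Rightarrow> real \<Rightarrow> complex set \<Rightarrow> complex set set \<Rightarrow> complex list set multiset" where
  "strata_no \<epsilon> r0 V E = strata \<epsilon> V E - strata_int \<epsilon> r0 V E"

definition strata_perp :: "real \<Rightarrow> complex set \<Rightarrow> complex set set \<Rightarrow> complex list set \<Rightarrow> complex list set multiset" where
  "strata_perp \<epsilon> V E s = filter_mset (\<lambda>t. spts t \<inter> spts s \<noteq> {}) (strata \<epsilon> V E - {#s#})"

end

(*
  Every bond angle at a vertex is within epsilon of pi/2, pi or 3 pi/2.  Hence each bond at a
  vertex has at most one opposite bond, and among any three bonds two are opposite.  Along a
  straight path the direction turns by at most the angle excess, less than pi/10, so straight
  paths are injective and a maximal straight path is determined by any one of its edges.

  Consequently the strata of S_Gamma through a vertex x are the maximal paths through its bonds,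
  each carrying one or two of them, and the singleton strata complete this to exactly two strata
  through x; double counting gives (i), and (iii) follows.  For (ii), a stratum of length l
  carries l - 1 edges, and the substrate bond of a vertex (there is at most one) either continues
  a maximal path straight into the substrate or belongs to an interacting singleton stratum; a
  path that turns by less than pi/10 can meet the substrate at most at one of its ends.
*)

theory Submission
  imports Defs
begin

section \<open>Arguments and turning angles\<close>

lemma cw_angle_eq_Arg2pi: "cw_angle x y z = Arg2pi ((x - y) / (z - y))"
proof (cases "(x - y) / (z - y) = 0")
  case True
  show ?thesis unfolding cw_angle_def Let_def True by (simp add: Arg_zero)
next
  case False
  let ?w = "(x - y) / (z - y)"
  define a where "a = (if Arg ?w < 0 then Arg ?w + 2 * pi else Arg ?w)"
  have "is_Arg ?w a"
    using is_Arg_Arg[OF False] is_Arg_2pi_iff[of ?w "Arg ?w" 1] by (simp add: a_def)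
  moreover have "0 \<le> a" "a < 2 * pi"
    using mpi_less_Arg[of ?w] Arg_le_pi[of ?w] by (auto simp: a_def)
  ultimately have "Arg2pi ?w = a"
    using Arg2pi[of ?w] False by (metis Arg2pi_unique_lemma)
  then show ?thesis by (simp add: cw_angle_def a_def Let_def)
qed

lemma cw_angle_ge_0: "0 \<le> cw_angle x y z"
  and cw_angle_less_2pi: "cw_angle x y z < 2 * pi"
  by (simp_all add: cw_angle_eq_Arg2pi Arg2pi_ge_0 Arg2pi_lt_2pi)

lemma is_Arg_cw_angle: "is_Arg ((x - y) / (z - y)) (cw_angle x y z)"
  using Arg2pi by (simp add: cw_angle_eq_Arg2pi)

lemma cw_angle_same: "cw_angle x y x = 0"
  by (cases "x = y") (simp_all add: cw_angle_eq_Arg2pi Arg2pi_of_real[of 1, simplified])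

lemma cw_angle_swap:
  "cw_angle z y x = (if (x - y) / (z - y) \<in> \<real> then cw_angle x y z else 2 * pi - cw_angle x y z)"
proof -
  have "(z - y) / (x - y) = inverse ((x - y) / (z - y))" by simp
  then show ?thesis unfolding cw_angle_eq_Arg2pi by (metis Arg2pi_inverse)
qed

lemma is_Arg_mult:
  assumes "is_Arg w a" "is_Arg v b"
  shows "is_Arg (w * v) (a + b)"
proof -
  have "w * v = (of_real (norm w) * exp (\<i> * of_real a)) * (of_real (norm v) * exp (\<i> * of_real b))"
    using assms unfolding is_Arg_def by (rule arg_cong2[where f = times])
  also have "\<dots> = of_real (norm (w * v)) * exp (\<i> * of_real (a + b))"
    by (simp add: norm_mult exp_add algebra_simps)
  finally show ?thesis unfolding is_Arg_def .
qed

lemma is_Arg_inverse: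
  assumes "is_Arg w a"
  shows "is_Arg (inverse w) (- a)"
proof -
  have "inverse w = inverse (of_real (norm w) * exp (\<i> * of_real a))"
    using assms unfolding is_Arg_def by (rule arg_cong)
  also have "\<dots> = of_real (norm (inverse w)) * exp (\<i> * of_real (- a))"
    by (simp add: norm_inverse exp_minus)
  finally show ?thesis unfolding is_Arg_def .
qed

lemma is_Arg_divide: "is_Arg w a \<Longrightarrow> is_Arg v b \<Longrightarrow> is_Arg (w / v) (a - b)"
  using is_Arg_mult[OF _ is_Arg_inverse] by (simp add: divide_inverse)

lemma is_Arg_divide_cancel_left:
  assumes "is_Arg w a" "is_Arg (w / v) t" "w \<noteq> 0"
  shows "is_Arg v (a - t)"
  using is_Arg_divide[OF assms(1,2)] assms(3) by simp

lemma is_Arg_uminus: "is_Arg w a \<Longrightarrow> is_Arg (- w) (a + pi)"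
  unfolding is_Arg_def by (simp add: distrib_left exp_add)

text \<open>Two arguments differ by a multiple of 2 pi, stated in the form used by linarith.\<close>
lemma is_Arg_diff_cases:
  assumes "w \<noteq> 0" "is_Arg w a" "is_Arg w b"
  shows "a - b \<le> - 4 * pi \<or> a - b = - 2 * pi \<or> a = b \<or> a - b = 2 * pi \<or> 4 * pi \<le> a - b"
proof -
  have "exp (\<i> * of_real a) = exp (\<i> * of_real b)"
    using assms unfolding is_Arg_def by (metis mult_cancel_left norm_eq_zero of_real_eq_0_iff)
  then obtain n :: int where "\<i> * of_real a = \<i> * of_real b + of_int (2 * n) * pi * \<i>"
    unfolding exp_eq by blast
  then have "Im (\<i> * of_real a) = Im (\<i> * of_real b + of_int (2 * n) * pi * \<i>)"
    by (simp only:)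
  then have n: "a - b = 2 * pi * of_int n" by simp
  consider "n \<le> -2" | "n = -1" | "n = 0" | "n = 1" | "2 \<le> n" by linarith
  then show ?thesis
  proof cases
    case 1
    then have "2 * pi * of_int n \<le> 2 * pi * (- 2)" by (intro mult_left_mono) auto
    then show ?thesis using n by simp
  next
    case 5
    then have "2 * pi * 2 \<le> 2 * pi * of_int n" by (intro mult_left_mono) auto
    then show ?thesis using n by simp
  qed (use n in auto)
qed

lemma Re_is_Arg:
  assumes "is_Arg w t"
  shows "Re w = norm w * cos t"
proof -
  have "Re w = Re (of_real (norm w) * exp (\<i> * of_real t))"
    using assms unfolding is_Arg_def by (rule arg_cong)
  then show ?thesis by (simp add: Re_exp)
qed

lemma Im_is_Arg:
  assumes "is_Arg w t"
  shows "Im w = norm w * sin t"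
proof -
  have "Im w = Im (of_real (norm w) * exp (\<i> * of_real t))"
    using assms unfolding is_Arg_def by (rule arg_cong)
  then show ?thesis by (simp add: Im_exp)
qed

lemma Re_mult_cnj_pos:
  assumes "is_Arg (w / v) t" "w \<noteq> 0" "v \<noteq> 0" "\<bar>t\<bar> < pi / 2"
  shows "0 < Re (w * cnj v)"
proof -
  have "Re (w * cnj v) = Re (w / v) * (norm v)\<^sup>2"
    using assms(3) by (simp add: complex_div_cnj[of w v])
  also have "\<dots> = norm (w / v) * cos t * (norm v)\<^sup>2" using Re_is_Arg[OF assms(1)] by simp
  finally show ?thesis
    using assms(2,3) cos_gt_zero_pi[of t] assms(4) by simp
qed

definition edge_vec :: "complex list \<Rightarrow> nat \<Rightarrow> complex" where
  "edge_vec \<gamma> k = \<gamma> ! Suc k - \<gamma> ! k"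

definition turning :: "complex list \<Rightarrow> nat \<Rightarrow> real" where
  "turning \<gamma> k = (\<Sum>i\<in>{1..k}. cw_angle (\<gamma> ! Suc i) (\<gamma> ! i) (\<gamma> ! (i - 1)) - pi)"

lemma is_Arg_turning:
  assumes "\<And>i. i \<le> k \<Longrightarrow> edge_vec \<gamma> i \<noteq> 0"
  shows "is_Arg (edge_vec \<gamma> k / edge_vec \<gamma> 0) (turning \<gamma> k)"
  using assms
proof (induction k)
  case 0
  then show ?case by (simp add: turning_def is_Arg_def)
next
  case (Suc k)
  let ?c = "cw_angle (\<gamma> ! Suc (Suc k)) (\<gamma> ! Suc k) (\<gamma> ! k)"
  have nz: "edge_vec \<gamma> k \<noteq> 0" "edge_vec \<gamma> (Suc k) \<noteq> 0" using Suc.prems by auto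
  have "(\<gamma> ! Suc (Suc k) - \<gamma> ! Suc k) / (\<gamma> ! k - \<gamma> ! Suc k) = - (edge_vec \<gamma> (Suc k) / edge_vec \<gamma> k)"
    unfolding edge_vec_def by (metis minus_diff_eq divide_minus_right)
  then have "is_Arg (- (edge_vec \<gamma> (Suc k) / edge_vec \<gamma> k)) ?c"
    using is_Arg_cw_angle[of "\<gamma> ! Suc (Suc k)" "\<gamma> ! Suc k" "\<gamma> ! k"] by simp
  then have "is_Arg (edge_vec \<gamma> (Suc k) / edge_vec \<gamma> k) (?c + pi + of_int (- 1) * (2 * pi))"
    unfolding is_Arg_2pi_iff using is_Arg_uminus by fastforce
  then have "is_Arg (edge_vec \<gamma> (Suc k) / edge_vec \<gamma> k * (edge_vec \<gamma> k / edge_vec \<gamma> 0))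
      (?c - pi + turning \<gamma> k)"
    using is_Arg_mult Suc by fastforce
  moreover have "turning \<gamma> (Suc k) = ?c - pi + turning \<gamma> k" unfolding turning_def by simp
  ultimately show ?case using nz by simp
qed

section \<open>Lists and multisets\<close>

definition edges_distinct :: "'a list \<Rightarrow> bool" where
  "edges_distinct \<gamma> \<longleftrightarrow> (\<forall>i j. Suc i < length \<gamma> \<and> Suc j < length \<gamma> \<and> i \<noteq> j \<longrightarrow>
     {\<gamma> ! i, \<gamma> ! Suc i} \<noteq> {\<gamma> ! j, \<gamma> ! Suc j})"

lemma distinct_imp_edges_distinct: "distinct \<gamma> \<Longrightarrow> edges_distinct \<gamma>"
  unfolding edges_distinct_def by (auto simp: doubleton_eq_iff nth_eq_iff_index_eq)

lemma edges_distinct_snoc: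
  assumes "distinct \<gamma>" "2 \<le> length \<gamma>" "w \<noteq> last \<gamma>" "w \<noteq> \<gamma> ! (length \<gamma> - 2)"
  shows "edges_distinct (\<gamma> @ [w])"
proof -
  let ?n = "length \<gamma>"
  have "\<gamma> \<noteq> []" using assms(2) by auto
  then have last: "last \<gamma> = \<gamma> ! (?n - 1)" by (simp add: last_conv_nth)
  have new: "{\<gamma> ! (?n - 1), w} \<noteq> {\<gamma> ! j, \<gamma> ! Suc j}" if "Suc j < ?n" for j
  proof
    assume eq: "{\<gamma> ! (?n - 1), w} = {\<gamma> ! j, \<gamma> ! Suc j}"
    then have "\<gamma> ! (?n - 1) = \<gamma> ! j \<or> \<gamma> ! (?n - 1) = \<gamma> ! Suc j" by (auto simp: doubleton_eq_iff)
    then have j: "Suc j = ?n - 1" using assms(1) that by (auto simp: nth_eq_iff_index_eq)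
    with eq have "w = \<gamma> ! j" using assms(3) last by (auto simp: doubleton_eq_iff)
    moreover have "j = ?n - 2" using j by arith
    ultimately show False using assms(4) by simp
  qed
  have edge: "{(\<gamma> @ [w]) ! i, (\<gamma> @ [w]) ! Suc i} =
      (if Suc i < ?n then {\<gamma> ! i, \<gamma> ! Suc i} else {\<gamma> ! (?n - 1), w})"
    if "Suc i < length (\<gamma> @ [w])" for i
  proof (cases "Suc i < ?n")
    case False
    then have "i = ?n - 1" "Suc i = ?n" using that by auto
    then show ?thesis using assms(2) by (simp add: nth_append)
  qed (simp add: nth_append)
  show ?thesis
    unfolding edges_distinct_def
  proof (intro allI impI)
    fix i j assume ij: "Suc i < length (\<gamma> @ [w]) \<and> Suc j < length (\<gamma> @ [w]) \<and> i \<noteq> j"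
    then have "{(\<gamma> @ [w]) ! i, (\<gamma> @ [w]) ! Suc i} =
        (if Suc i < ?n then {\<gamma> ! i, \<gamma> ! Suc i} else {\<gamma> ! (?n - 1), w})"
      "{(\<gamma> @ [w]) ! j, (\<gamma> @ [w]) ! Suc j} =
        (if Suc j < ?n then {\<gamma> ! j, \<gamma> ! Suc j} else {\<gamma> ! (?n - 1), w})"
      using edge by blast+
    then show "{(\<gamma> @ [w]) ! i, (\<gamma> @ [w]) ! Suc i} \<noteq> {(\<gamma> @ [w]) ! j, (\<gamma> @ [w]) ! Suc j}"
      using distinct_imp_edges_distinct[OF assms(1)] new[of i] new[of j] ij
      unfolding edges_distinct_def by (auto split: if_splits)
  qed
qed

lemma sublist_pair_iff_nth:
  "sublist [x, y] \<mu> \<longleftrightarrow> (\<exists>i. Suc i < length \<mu> \<and> \<mu> ! i = x \<and> \<mu> ! Suc i = y)"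
proof
  assume "sublist [x, y] \<mu>"
  then obtain a b where "\<mu> = a @ x # y # b" unfolding sublist_def by auto
  then show "\<exists>i. Suc i < length \<mu> \<and> \<mu> ! i = x \<and> \<mu> ! Suc i = y"
    by (intro exI[of _ "length a"]) (simp add: nth_append)
next
  assume "\<exists>i. Suc i < length \<mu> \<and> \<mu> ! i = x \<and> \<mu> ! Suc i = y"
  then obtain i where i: "Suc i < length \<mu>" "\<mu> ! i = x" "\<mu> ! Suc i = y" by blast
  then have "\<mu> = take i \<mu> @ [x, y] @ drop (Suc (Suc i)) \<mu>"
    by (metis Cons_nth_drop_Suc Suc_lessD append_Cons append_Nil append_take_drop_id)
  then show "sublist [x, y] \<mu>" unfolding sublist_def by blast
qed

lemma sublist_nth_triple:
  assumes "Suc (Suc i) < length \<mu>"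
  shows "sublist [\<mu> ! i, \<mu> ! Suc i, \<mu> ! Suc (Suc i)] \<mu>"
proof -
  have "drop i \<mu> = [\<mu> ! i, \<mu> ! Suc i, \<mu> ! Suc (Suc i)] @ drop (Suc (Suc (Suc i))) \<mu>"
    using assms by (simp add: Cons_nth_drop_Suc)
  then have "\<mu> = take i \<mu> @ [\<mu> ! i, \<mu> ! Suc i, \<mu> ! Suc (Suc i)] @ drop (Suc (Suc (Suc i))) \<mu>"
    by (metis append_take_drop_id)
  then show ?thesis unfolding sublist_def by blast
qed

lemma distinct_sublist_pair_eq:
  assumes "distinct \<mu>" "sublist [x, y] \<mu>" "sublist [x, y'] \<mu>"
  shows "y = y'"
proof -
  obtain i j where i: "Suc i < length \<mu>" "\<mu> ! i = x" "\<mu> ! Suc i = y"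
    and j: "Suc j < length \<mu>" "\<mu> ! j = x" "\<mu> ! Suc j = y'"
    using assms(2,3) unfolding sublist_pair_iff_nth by blast
  then have "i = j" using nth_eq_iff_index_eq[OF assms(1), of i j] by simp
  then show ?thesis using i j by simp
qed

lemma distinct_sublist_pairs_join:
  assumes "distinct \<mu>" "sublist [y, x] \<mu>" "sublist [x, y'] \<mu>"
  shows "sublist [y, x, y'] \<mu>"
proof -
  obtain i j where i: "Suc i < length \<mu>" "\<mu> ! i = y" "\<mu> ! Suc i = x"
    and j: "Suc j < length \<mu>" "\<mu> ! j = x" "\<mu> ! Suc j = y'"
    using assms(2,3) unfolding sublist_pair_iff_nth by blast
  then have "j = Suc i" using nth_eq_iff_index_eq[OF assms(1), of j "Suc i"] by simp
  then show ?thesis using sublist_nth_triple[of i \<mu>] i j by simp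
qed

lemma distinct_sublist_pair_not_swap:
  assumes "distinct \<mu>" "sublist [x, y] \<mu>"
  shows "\<not> sublist [y, x] \<mu>"
proof
  assume "sublist [y, x] \<mu>"
  from distinct_sublist_pairs_join[OF assms(1) this assms(2)]
  obtain p q where "\<mu> = p @ [y, x, y] @ q" unfolding sublist_def by blast
  with assms(1) show False by simp
qed

lemma rev_nth_ends:
  assumes "2 \<le> length xs"
  shows "rev xs ! 0 = last xs" "rev xs ! 1 = xs ! (length xs - 2)"
    "last (rev xs) = xs ! 0" "rev xs ! (length xs - 2) = xs ! 1"
proof -
  have "xs \<noteq> []" using assms by auto
  then show "rev xs ! 0 = last xs" "last (rev xs) = xs ! 0"
    by (simp_all add: rev_nth last_conv_nth hd_conv_nth)
  show "rev xs ! 1 = xs ! (length xs - 2)" "rev xs ! (length xs - 2) = xs ! 1"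
    using assms by (simp_all add: rev_nth numeral_2_eq_2)
qed

lemma sublist_pair_iff_in_zip: "sublist [x, y] \<mu> \<longleftrightarrow> (x, y) \<in> set (zip \<mu> (tl \<mu>))"
  unfolding sublist_pair_iff_nth
proof
  assume "\<exists>i. Suc i < length \<mu> \<and> \<mu> ! i = x \<and> \<mu> ! Suc i = y"
  then obtain i where "Suc i < length \<mu>" "\<mu> ! i = x" "\<mu> ! Suc i = y" by blast
  then show "(x, y) \<in> set (zip \<mu> (tl \<mu>))" unfolding in_set_zip by (intro exI[of _ i]) (simp add: nth_tl)
next
  assume "(x, y) \<in> set (zip \<mu> (tl \<mu>))"
  then obtain n where "x = \<mu> ! n" "y = tl \<mu> ! n" "n < length (tl \<mu>)" unfolding in_set_zip by auto
  then show "\<exists>i. Suc i < length \<mu> \<and> \<mu> ! i = x \<and> \<mu> ! Suc i = y" by (intro exI[of _ n]) (simp add: nth_tl)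
qed

lemma card_set_zip_tl: "distinct \<mu> \<Longrightarrow> card (set (zip \<mu> (tl \<mu>))) = length \<mu> - 1"
  using distinct_card[OF distinct_zipI1, of \<mu> "tl \<mu>"] by simp

lemma card_sublist_pairs:
  assumes "distinct \<mu>"
  shows "card {(x, y). sublist [x, y] \<mu> \<or> sublist [x, y] (rev \<mu>)} = 2 * (length \<mu> - 1)"
proof -
  have eq: "{(x, y). sublist [x, y] \<nu>} = set (zip \<nu> (tl \<nu>))" for \<nu>
    by (auto simp: sublist_pair_iff_in_zip)
  have "{(x, y). sublist [x, y] \<mu> \<or> sublist [x, y] (rev \<mu>)}
      = {(x, y). sublist [x, y] \<mu>} \<union> {(x, y). sublist [x, y] (rev \<mu>)}" by auto
  moreover have "{(x, y). sublist [x, y] \<mu>} \<inter> {(x, y). sublist [x, y] (rev \<mu>)} = {}"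
    using distinct_sublist_pair_not_swap[OF assms] by (auto simp: sublist_rev_right)
  ultimately show ?thesis
    using assms card_Un_disjoint[of "set (zip \<mu> (tl \<mu>))" "set (zip (rev \<mu>) (tl (rev \<mu>)))"]
    unfolding eq by (simp add: card_set_zip_tl)
qed

lemma card_le_2_if_no_three:
  assumes "finite A" "\<And>a b c. a \<in> A \<Longrightarrow> b \<in> A \<Longrightarrow> c \<in> A \<Longrightarrow> a \<noteq> b \<Longrightarrow> b \<noteq> c \<Longrightarrow> a \<noteq> c \<Longrightarrow> False"
  shows "card A \<le> 2"
proof (rule ccontr)
  assume "\<not> card A \<le> 2"
  then obtain T where "T \<subseteq> A" "card T = 3" using obtain_subset_with_card_n[of 3 A] by auto
  then show False using assms(2) unfolding card_3_iff by blast
qed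

lemma size_filter_mset_eq_2:
  assumes "size (filter_mset P M) = 2"
  shows "\<exists>s s'. filter_mset P M = {#s, s'#} \<and> s' \<in># M - {#s#}"
proof -
  let ?F = "filter_mset P M"
  obtain s F' where sF: "?F = add_mset s F'"
    using assms size_eq_Suc_imp_eq_union[of ?F 1] by auto
  then have "size F' = 1" using assms by simp
  then obtain s' where "F' = {#s'#}" using size_1_singleton_mset by blast
  then have F: "?F = {#s, s'#}" using sF by simp
  have "count ?F s' \<le> count M s'" by simp
  moreover have "count ?F s' = (if s = s' then 2 else 1)" using F by simp
  ultimately have "count {#s#} s' < count M s'" by (cases "s = s'") simp_all
  then have "s' \<in># M - {#s#}" by (simp add: in_diff_count)
  with F show ?thesis by blast
qed

lemma sum_mset_card_eq_sum_size_filter: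
  assumes "finite A" "\<forall>s \<in># M. f s \<subseteq> A"
  shows "(\<Sum>s \<in># M. card (f s)) = (\<Sum>x\<in>A. size (filter_mset (\<lambda>s. x \<in> f s) M))"
  using assms(2)
proof (induction M)
  case (add s M)
  have "card (f s) = (\<Sum>x\<in>A. if x \<in> f s then 1 else 0)"
    using add.prems assms(1) by (simp add: sum.If_cases Int_absorb1)
  then have "(\<Sum>s' \<in># add_mset s M. card (f s'))
      = (\<Sum>x\<in>A. (if x \<in> f s then 1 else 0) + size (filter_mset (\<lambda>s. x \<in> f s) M))"
    using add by (simp add: sum.distrib)
  also have "\<dots> = (\<Sum>x\<in>A. size (filter_mset (\<lambda>s'. x \<in> f s') (add_mset s M)))"
    by (rule sum.cong) auto
  finally show ?case .
qed simp

lemma upath_eq_iff: "upath \<gamma> = upath \<gamma>' \<longleftrightarrow> \<gamma>' = \<gamma> \<or> \<gamma>' = rev \<gamma>"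
  unfolding upath_def by (auto simp: doubleton_eq_iff)

lemma upath_rev: "upath (rev \<gamma>) = upath \<gamma>"
  unfolding upath_def by auto

lemma spts_upath: "spts (upath \<gamma>) = set \<gamma>"
  unfolding spts_def upath_def by auto

lemma slen_upath: "slen (upath \<gamma>) = length \<gamma>"
proof -
  have "(SOME \<gamma>'. \<gamma>' \<in> upath \<gamma>) \<in> upath \<gamma>" by (rule someI[of _ \<gamma>]) (simp add: upath_def)
  then show ?thesis unfolding slen_def upath_def by auto
qed

lemma size_filter_upath_singletons:
  assumes "finite A"
  shows "size (filter_mset (\<lambda>t. x \<in> spts t) (image_mset (\<lambda>a. upath [a]) (mset_set A)))
    = (if x \<in> A then 1 else 0)"
proof -
  have "{a \<in> A. x \<in> spts (upath [a])} = (if x \<in> A then {x} else {})" by (auto simp: spts_upath)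
  then show ?thesis using assms by (simp add: filter_mset_image_mset)
qed

section \<open>Local geometry of regular configurations\<close>

lemma substrate_Im_le_0: "z \<in> substrate \<Longrightarrow> Im z \<le> 0"
  unfolding substrate_def by auto

lemma substrate_add_diff_1:
  assumes "z \<in> substrate"
  shows "z + 1 \<in> substrate" "z - 1 \<in> substrate"
proof -
  obtain m n :: int where z: "z = Complex (of_int m) (of_int n)" "n \<le> 0"
    using assms unfolding substrate_def by auto
  have "z + 1 = Complex (of_int (m + 1)) (of_int n)" "z - 1 = Complex (of_int (m - 1)) (of_int n)"
    using z by (auto simp: complex_eq_iff)
  then show "z + 1 \<in> substrate" "z - 1 \<in> substrate"
    using z(2) unfolding substrate_def by blast+
qed

locale eps_regular_graph =
  fixes \<epsilon> r0 :: real and V :: "complex set" and E :: "complex set set"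
  assumes eps_pos: "0 < \<epsilon>" and eps_le: "\<epsilon> \<le> pi / 39"
    and finite_V: "finite V"
    and V_upper: "\<forall>x \<in> V. Im x > 0"
    and E_edges: "E \<subseteq> {{x, y} | x y. x \<in> V \<and> y \<in> V \<and> x \<noteq> y}"
    and regular: "regular \<epsilon> r0 V E"
begin

abbreviation N :: "complex \<Rightarrow> complex set" where "N \<equiv> nbr V E"

abbreviation N_sub :: "complex \<Rightarrow> complex set" where "N_sub \<equiv> nbr_sub r0"

definition bonded :: "complex \<Rightarrow> complex set" where
  "bonded x = N x \<union> N_sub x"

definition admissible_angle :: "real \<Rightarrow> bool" where
  "admissible_angle t \<longleftrightarrow> (pi/2 - \<epsilon> \<le> t \<and> t \<le> pi/2 + \<epsilon>) \<or> (pi - \<epsilon> \<le> t \<and> t \<le> pi + \<epsilon>)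
     \<or> (3*pi/2 - \<epsilon> \<le> t \<and> t \<le> 3*pi/2 + \<epsilon>)"

definition opposite :: "complex \<Rightarrow> complex \<Rightarrow> complex \<Rightarrow> bool" where
  "opposite a x b \<longleftrightarrow> cw_angle a x b \<in> {pi - \<epsilon> .. pi + \<epsilon>}"

lemma opposite_iff: "opposite a x b \<longleftrightarrow> pi - \<epsilon> \<le> cw_angle a x b \<and> cw_angle a x b \<le> pi + \<epsilon>"
  unfolding opposite_def by simp

lemma opposite_sym: "opposite a x b \<Longrightarrow> opposite b x a"
  unfolding opposite_iff using cw_angle_swap[of a x b] by (auto split: if_splits)

lemma not_opposite_same: "\<not> opposite a x a"
  unfolding opposite_iff cw_angle_same using eps_le pi_gt_zero by linarith

lemma V_not_substrate: "x \<in> V \<Longrightarrow> x \<notin> substrate"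
  using V_upper substrate_Im_le_0 by fastforce

lemma edge_vertices: "{a, b} \<in> E \<Longrightarrow> a \<in> V \<and> b \<in> V \<and> a \<noteq> b"
  using E_edges by (auto simp: doubleton_eq_iff)

lemma in_nbr_iff: "y \<in> N x \<longleftrightarrow> y \<in> V \<and> {x, y} \<in> E"
  unfolding nbr_def by auto

lemma finite_nbr: "finite (N x)"
  using finite_V unfolding nbr_def by auto

lemma nbr_not_substrate_nbr: "y \<in> N x \<Longrightarrow> z \<in> N_sub x \<Longrightarrow> y \<noteq> z"
  using V_not_substrate unfolding nbr_def nbr_sub_def by auto

lemma bondedD:
  assumes "x \<in> V" "a \<in> bonded x"
  shows "a \<in> V \<union> substrate" "a \<noteq> x" "{a, x} \<in> bonds r0 V E" "{x, a} \<in> bonds r0 V E"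
proof -
  show "a \<in> V \<union> substrate" "a \<noteq> x"
    using assms V_not_substrate edge_vertices unfolding bonded_def nbr_def nbr_sub_def by auto
  show "{x, a} \<in> bonds r0 V E"
    using assms unfolding bonded_def nbr_def bonds_def by blast
  then show "{a, x} \<in> bonds r0 V E" by (simp add: insert_commute)
qed

lemma admissible_angle_bonds:
  assumes "x \<in> V \<union> substrate" "y \<in> V \<union> substrate" "z \<in> V \<union> substrate"
    "x \<noteq> y" "y \<noteq> z" "x \<noteq> z" "{x, y} \<in> bonds r0 V E" "{y, z} \<in> bonds r0 V E"
  shows "admissible_angle (cw_angle x y z)"
  using regular assms unfolding regular_def admissible_angle_def by auto

lemma admissible_angle_bonded:
  assumes "x \<in> V" "a \<in> bonded x" "b \<in> bonded x" "a \<noteq> b"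
  shows "admissible_angle (cw_angle a x b)"
  using bondedD[OF assms(1,2)] bondedD[OF assms(1,3)] assms
  by (intro admissible_angle_bonds) auto

lemma bonded_angle_not_small:
  assumes "x \<in> V" "a \<in> bonded x" "b \<in> bonded x" "a \<noteq> b"
    and "is_Arg ((a - x) / (b - x)) t" "\<bar>t\<bar> \<le> 3 * \<epsilon>"
  shows False
proof -
  have "a \<noteq> x" "b \<noteq> x" using bondedD assms by auto
  then have "(a - x) / (b - x) \<noteq> 0" by simp
  have t: "- 3 * \<epsilon> \<le> t" "t \<le> 3 * \<epsilon>" using assms(6) by auto
  from is_Arg_diff_cases[OF \<open>_ \<noteq> 0\<close> is_Arg_cw_angle assms(5)] admissible_angle_bonded[OF assms(1-4)]
  show False
    using t eps_pos eps_le cw_angle_ge_0[of a x b] cw_angle_less_2pi[of a x b]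
    unfolding admissible_angle_def by (elim disjE conjE; linarith)
qed

lemma opposite_unique:
  assumes "x \<in> V" "a \<in> bonded x" "b \<in> bonded x" "c \<in> bonded x"
    and "opposite a x b" "opposite a x c"
  shows "b = c"
proof (rule ccontr)
  assume "b \<noteq> c"
  have ne: "a - x \<noteq> 0" "b - x \<noteq> 0" "c - x \<noteq> 0" using bondedD assms by auto
  have "is_Arg (((a - x) / (b - x)) / ((a - x) / (c - x))) (cw_angle a x b - cw_angle a x c)"
    by (intro is_Arg_divide is_Arg_cw_angle)
  also have "((a - x) / (b - x)) / ((a - x) / (c - x)) = (c - x) / (b - x)"
    using ne by (simp add: divide_simps)
  finally show False
    using bonded_angle_not_small[OF assms(1,4,3)] \<open>b \<noteq> c\<close> assms(5,6) unfolding opposite_iff by fastforce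
qed

lemma bonded_not_opposite_perpendicular:
  assumes "x \<in> V" "a \<in> bonded x" "b \<in> bonded x" "a \<noteq> b" "\<not> opposite a x b"
  shows "(pi/2 - \<epsilon> \<le> cw_angle a x b \<and> cw_angle a x b \<le> pi/2 + \<epsilon>)
    \<or> (3*pi/2 - \<epsilon> \<le> cw_angle a x b \<and> cw_angle a x b \<le> 3*pi/2 + \<epsilon>)"
  using admissible_angle_bonded[OF assms(1-4)] assms(5) unfolding admissible_angle_def opposite_iff
  by blast

lemma three_bonded_opposite:
  assumes "x \<in> V" "a \<in> bonded x" "b \<in> bonded x" "c \<in> bonded x" "a \<noteq> b" "b \<noteq> c" "a \<noteq> c"
  shows "opposite a x b \<or> opposite b x c \<or> opposite a x c"
proof (rule ccontr)
  assume no: "\<not> ?thesis"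
  have ne: "a - x \<noteq> 0" "b - x \<noteq> 0" "c - x \<noteq> 0" using bondedD assms by auto
  have "is_Arg (((a - x) / (b - x)) * ((b - x) / (c - x))) (cw_angle a x b + cw_angle b x c)"
    by (intro is_Arg_mult is_Arg_cw_angle)
  also have "((a - x) / (b - x)) * ((b - x) / (c - x)) = (a - x) / (c - x)"
    using ne by (simp add: divide_simps)
  finally have arg: "is_Arg ((a - x) / (c - x)) (cw_angle a x b + cw_angle b x c)" .
  have "(a - x) / (c - x) \<noteq> 0" using ne by simp
  note diff_cases = is_Arg_diff_cases[OF this is_Arg_cw_angle arg]
  have "\<not> opposite a x b" "\<not> opposite b x c" "\<not> opposite a x c" using no by auto
  from diff_cases bonded_not_opposite_perpendicular[OF assms(1,2,3,5) this(1)]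
    bonded_not_opposite_perpendicular[OF assms(1,3,4,6) this(2)]
    bonded_not_opposite_perpendicular[OF assms(1,2,4,7) this(3)]
  show False using eps_pos eps_le by (elim disjE conjE; linarith)
qed

text \<open>The substrate bonds from z to z + 1 and z - 1 are horizontal, and both make admissible
  angles with the bond from z to x.\<close>
lemma substrate_nbr_below:
  assumes "x \<in> V" "z \<in> N_sub x"
  obtains \<phi> where "is_Arg (x - z) \<phi>" "pi/2 - \<epsilon> \<le> \<phi>" "\<phi> \<le> pi/2 + \<epsilon>"
proof -
  have z: "z \<in> substrate" "z + 1 \<in> substrate" "z - 1 \<in> substrate"
    using assms substrate_add_diff_1 unfolding nbr_sub_def by auto
  have ne: "x \<noteq> z" "x \<noteq> z + 1" "x \<noteq> z - 1" using V_not_substrate assms(1) z by auto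
  have "{z, z + 1} \<in> bonds r0 V E" "{z, z - 1} \<in> bonds r0 V E" "{x, z} \<in> bonds r0 V E"
    using z assms unfolding bonds_def by fastforce+
  then have adm: "admissible_angle (cw_angle x z (z + 1))" "admissible_angle (cw_angle x z (z - 1))"
    using assms(1) z ne by (auto intro!: admissible_angle_bonds)
  let ?\<phi> = "cw_angle x z (z + 1)"
  have arg: "is_Arg (x - z) ?\<phi>" using is_Arg_cw_angle[of x z "z + 1"] by simp
  have "is_Arg (- (x - z)) (cw_angle x z (z - 1))" using is_Arg_cw_angle[of x z "z - 1"] by simp
  then have "is_Arg (x - z) (cw_angle x z (z - 1) + pi)" using is_Arg_uminus by fastforce
  note diff_cases = is_Arg_diff_cases[OF _ arg this, simplified, OF ne(1)]
  have "0 < Im (x - z)" using V_upper assms(1) substrate_Im_le_0[OF z(1)] by auto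
  then have "0 < norm (x - z) * sin ?\<phi>" using Im_is_Arg[OF arg] by simp
  then have "0 < sin ?\<phi>" by (simp add: zero_less_mult_iff)
  then have "?\<phi> < pi" using sin_le_zero[of ?\<phi>] cw_angle_less_2pi[of x z "z + 1"] by fastforce
  have "\<not> pi - \<epsilon> \<le> ?\<phi>"
  proof
    assume "pi - \<epsilon> \<le> ?\<phi>"
    with diff_cases adm(2) ne \<open>?\<phi> < pi\<close> show False
      using eps_pos eps_le cw_angle_ge_0[of x z "z - 1"] cw_angle_less_2pi[of x z "z - 1"]
      unfolding admissible_angle_def by (elim disjE conjE; linarith)
  qed
  with adm(1) \<open>?\<phi> < pi\<close> have "pi/2 - \<epsilon> \<le> ?\<phi> \<and> ?\<phi> \<le> pi/2 + \<epsilon>"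
    unfolding admissible_angle_def using eps_pos eps_le by (elim disjE conjE; linarith)
  then show ?thesis using that[OF arg] by blast
qed

lemma substrate_nbr_unique:
  assumes "x \<in> V" "z1 \<in> N_sub x" "z2 \<in> N_sub x"
  shows "z1 = z2"
proof (rule ccontr)
  assume ne: "z1 \<noteq> z2"
  obtain \<phi>1 where 1: "is_Arg (x - z1) \<phi>1" "pi/2 - \<epsilon> \<le> \<phi>1" "\<phi>1 \<le> pi/2 + \<epsilon>"
    using substrate_nbr_below[OF assms(1,2)] by blast
  obtain \<phi>2 where 2: "is_Arg (x - z2) \<phi>2" "pi/2 - \<epsilon> \<le> \<phi>2" "\<phi>2 \<le> pi/2 + \<epsilon>"
    using substrate_nbr_below[OF assms(1,3)] by blast
  have "(x - z1) / (x - z2) = (z1 - x) / (z2 - x)" by (metis minus_diff_eq minus_divide_divide)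
  then have "is_Arg ((z1 - x) / (z2 - x)) (\<phi>1 - \<phi>2)" using is_Arg_divide[OF 1(1) 2(1)] by simp
  moreover have "z1 \<in> bonded x" "z2 \<in> bonded x" using assms unfolding bonded_def by auto
  ultimately show False using bonded_angle_not_small[OF assms(1) _ _ ne] 1 2 eps_pos by fastforce
qed

abbreviation straight :: "complex list \<Rightarrow> bool" where
  "straight \<equiv> straight_path \<epsilon> V E"

lemma straight_length: "straight \<gamma> \<Longrightarrow> 2 \<le> length \<gamma>"
  and straight_set: "straight \<gamma> \<Longrightarrow> set \<gamma> \<subseteq> V"
  and straight_edge: "straight \<gamma> \<Longrightarrow> Suc i < length \<gamma> \<Longrightarrow> {\<gamma> ! i, \<gamma> ! Suc i} \<in> E"
  and straight_opposite:
    "straight \<gamma> \<Longrightarrow> 0 < i \<Longrightarrow> Suc i < length \<gamma> \<Longrightarrow> opposite (\<gamma> ! Suc i) (\<gamma> ! i) (\<gamma> ! (i - 1))"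
  unfolding straight_path_def opposite_def by blast+

lemma straight_nth_in_V: "straight \<gamma> \<Longrightarrow> i < length \<gamma> \<Longrightarrow> \<gamma> ! i \<in> V"
  using straight_set nth_mem by blast

lemma straight_nbr:
  assumes "straight \<gamma>" "Suc i < length \<gamma>"
  shows "\<gamma> ! Suc i \<in> N (\<gamma> ! i)" "\<gamma> ! i \<in> N (\<gamma> ! Suc i)"
  using straight_edge[OF assms] edge_vertices[OF straight_edge[OF assms]]
  unfolding in_nbr_iff by (auto simp: insert_commute)

lemma straight_edge_vec_nonzero: "straight \<gamma> \<Longrightarrow> Suc i < length \<gamma> \<Longrightarrow> edge_vec \<gamma> i \<noteq> 0"
  using straight_edge edge_vertices unfolding edge_vec_def by fastforce

lemma straight_iff:
  "straight \<gamma> \<longleftrightarrow> 2 \<le> length \<gamma> \<and> set \<gamma> \<subseteq> V \<and> (\<forall>i. Suc i < length \<gamma> \<longrightarrow> {\<gamma> ! i, \<gamma> ! Suc i} \<in> E)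
     \<and> (\<forall>i. 0 < i \<and> Suc i < length \<gamma> \<longrightarrow> opposite (\<gamma> ! Suc i) (\<gamma> ! i) (\<gamma> ! (i - 1)))
     \<and> edges_distinct \<gamma>"
  unfolding straight_path_def opposite_def edges_distinct_def by blast

lemma straight_intro:
  assumes "2 \<le> length \<gamma>" "set \<gamma> \<subseteq> V" "\<And>i. Suc i < length \<gamma> \<Longrightarrow> {\<gamma> ! i, \<gamma> ! Suc i} \<in> E"
    "\<And>i. 0 < i \<Longrightarrow> Suc i < length \<gamma> \<Longrightarrow> opposite (\<gamma> ! Suc i) (\<gamma> ! i) (\<gamma> ! (i - 1))"
    "distinct \<gamma>"
  shows "straight \<gamma>"
  using assms distinct_imp_edges_distinct unfolding straight_iff by blast

lemma straight_pair: "{x, y} \<in> E \<Longrightarrow> straight [x, y]"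
  using edge_vertices[of x y] by (intro straight_intro) (auto simp: less_Suc_eq nth_Cons')

text \<open>The path arriving at x from y would continue straight into the substrate.\<close>
definition anchored :: "complex \<Rightarrow> complex \<Rightarrow> bool" where
  "anchored x y \<longleftrightarrow> (\<exists>z \<in> N_sub x. opposite z x y)"

lemma interacting_path_iff:
  "interacting_path \<epsilon> r0 \<gamma> \<longleftrightarrow> anchored (\<gamma> ! 0) (\<gamma> ! 1) \<or> anchored (last \<gamma>) (\<gamma> ! (length \<gamma> - 2))"
  unfolding interacting_path_def anchored_def opposite_def[symmetric] using opposite_sym by blast

lemma interacting_upath_iff:
  assumes "2 \<le> length \<mu>"
  shows "interacting \<epsilon> r0 (upath \<mu>) \<longleftrightarrow> anchored (\<mu> ! 0) (\<mu> ! 1) \<or> anchored (last \<mu>) (\<mu> ! (length \<mu> - 2))"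
  using rev_nth_ends[OF assms] unfolding interacting_def upath_def interacting_path_iff by auto

end

section \<open>Straight paths with small angle excess\<close>

locale small_excess_graph = eps_regular_graph +
  assumes small_excess: "\<forall>\<gamma> \<in> Gamma \<epsilon> V E. angle_excess \<gamma> < pi / 10 - 7 / 5 * \<epsilon>"
begin

lemma abs_turning_less:
  assumes "straight \<gamma>" "Suc k < length \<gamma>"
  shows "\<bar>turning \<gamma> k\<bar> < pi / 10 - 7 / 5 * \<epsilon>"
proof -
  have "\<bar>turning \<gamma> k\<bar> \<le> (\<Sum>i\<in>{1..k}. \<bar>cw_angle (\<gamma> ! Suc i) (\<gamma> ! i) (\<gamma> ! (i - 1)) - pi\<bar>)"
    unfolding turning_def by (rule sum_abs)
  also have "\<dots> \<le> angle_excess \<gamma>"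
    unfolding angle_excess_def using assms(2) by (intro sum_mono2) auto
  also have "\<dots> < pi / 10 - 7 / 5 * \<epsilon>" using small_excess assms(1) unfolding Gamma_def by auto
  finally show ?thesis .
qed

lemma is_Arg_turning_straight:
  assumes "straight \<gamma>" "Suc k < length \<gamma>"
  shows "is_Arg (edge_vec \<gamma> k / edge_vec \<gamma> 0) (turning \<gamma> k)"
  using assms by (intro is_Arg_turning straight_edge_vec_nonzero) auto

lemma Re_edge_vec_cnj_pos:
  assumes "straight \<gamma>" "Suc k < length \<gamma>"
  shows "0 < Re (edge_vec \<gamma> k * cnj (edge_vec \<gamma> 0))"
  using abs_turning_less[OF assms] eps_pos
  by (intro Re_mult_cnj_pos[OF is_Arg_turning_straight[OF assms]] straight_edge_vec_nonzero[OF assms(1)])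
    (use assms in auto)

text \<open>The vertices of a straight path advance strictly in the direction of its first edge.\<close>
lemma straight_distinct:
  assumes "straight \<gamma>"
  shows "distinct \<gamma>"
proof -
  have pos: "0 < Re ((\<gamma> ! j - \<gamma> ! i) * cnj (edge_vec \<gamma> 0))" if "i < j" "j < length \<gamma>" for i j
  proof -
    have "\<gamma> ! j - \<gamma> ! i = (\<Sum>k = i..<j. edge_vec \<gamma> k)"
      unfolding edge_vec_def using that by (simp add: sum_Suc_diff')
    then have "Re ((\<gamma> ! j - \<gamma> ! i) * cnj (edge_vec \<gamma> 0))
        = (\<Sum>k = i..<j. Re (edge_vec \<gamma> k * cnj (edge_vec \<gamma> 0)))"
      by (simp add: sum_distrib_right)
    also have "\<dots> > 0"
      using that by (intro sum_pos Re_edge_vec_cnj_pos[OF assms]) auto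
    finally show ?thesis .
  qed
  have "\<gamma> ! i \<noteq> \<gamma> ! j" if "i < j" "j < length \<gamma>" for i j
    using pos[OF that] by auto
  then show ?thesis unfolding distinct_conv_nth by (metis linorder_neqE_nat)
qed

text \<open>A straight path anchored at its end points down at that end; if its first vertex had a
  substrate neighbour, the first edge would have to point down as well, since the path turns by
  less than pi/10 in total, but no admissible bond angle at the first vertex allows that.\<close>
lemma anchored_end_no_substrate_start:
  assumes path: "straight \<gamma>" and anch: "anchored (last \<gamma>) (\<gamma> ! (length \<gamma> - 2))"
  shows "N_sub (\<gamma> ! 0) = {}"
proof (rule ccontr)
  assume "N_sub (\<gamma> ! 0) \<noteq> {}"
  then obtain z where z: "z \<in> N_sub (\<gamma> ! 0)" by blast
  define m where "m = length \<gamma> - 2"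
  have "\<gamma> \<noteq> []" using straight_length[OF path] by auto
  then have m: "Suc m < length \<gamma>" "last \<gamma> = \<gamma> ! Suc m" "length \<gamma> - 2 = m"
    using straight_length[OF path] by (auto simp: m_def last_conv_nth Suc_diff_Suc numeral_2_eq_2)
  obtain z' where z': "z' \<in> N_sub (\<gamma> ! Suc m)" "opposite z' (\<gamma> ! Suc m) (\<gamma> ! m)"
    using anch m unfolding anchored_def by auto
  have V: "\<gamma> ! 0 \<in> V" "\<gamma> ! Suc m \<in> V"
    using straight_nth_in_V[OF path, of 0] straight_nth_in_V[OF path, of "Suc m"] m(1) \<open>\<gamma> \<noteq> []\<close> by auto
  have x1: "\<gamma> ! 1 \<in> N (\<gamma> ! 0)" using straight_nbr[OF path, of 0] m by simp
  have ne: "z - \<gamma> ! 0 \<noteq> 0" "\<gamma> ! Suc m - z' \<noteq> 0"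
    using V z z' V_not_substrate unfolding nbr_sub_def by auto
  obtain \<phi> where \<phi>: "is_Arg (\<gamma> ! 0 - z) \<phi>" "pi/2 - \<epsilon> \<le> \<phi>" "\<phi> \<le> pi/2 + \<epsilon>"
    using substrate_nbr_below[OF V(1) z] by blast
  obtain \<phi>' where \<phi>': "is_Arg (\<gamma> ! Suc m - z') \<phi>'" "pi/2 - \<epsilon> \<le> \<phi>'" "\<phi>' \<le> pi/2 + \<epsilon>"
    using substrate_nbr_below[OF V(2) z'(1)] by blast
  let ?t = "cw_angle z (\<gamma> ! 0) (\<gamma> ! 1)" and ?u = "cw_angle z' (\<gamma> ! Suc m) (\<gamma> ! m)"
  have t: "admissible_angle ?t"
    using V(1) z x1 nbr_not_substrate_nbr by (intro admissible_angle_bonded) (auto simp: bonded_def)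
  have "is_Arg (z - \<gamma> ! 0) (\<phi> + pi)" using is_Arg_uminus[OF \<phi>(1)] by simp
  from is_Arg_divide_cancel_left[OF this is_Arg_cw_angle ne(1)]
  have first: "is_Arg (edge_vec \<gamma> 0) (\<phi> + pi - ?t)" by (simp add: edge_vec_def)
  have "(z' - \<gamma> ! Suc m) / (\<gamma> ! m - \<gamma> ! Suc m) = (\<gamma> ! Suc m - z') / edge_vec \<gamma> m"
    unfolding edge_vec_def by (metis minus_diff_eq minus_divide_divide)
  with is_Arg_cw_angle[of z' "\<gamma> ! Suc m" "\<gamma> ! m"]
  have "is_Arg ((\<gamma> ! Suc m - z') / edge_vec \<gamma> m) ?u" by simp
  from is_Arg_divide_cancel_left[OF \<phi>'(1) this ne(2)]
  have last: "is_Arg (edge_vec \<gamma> m) (\<phi>' - ?u)" .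
  have "edge_vec \<gamma> m / edge_vec \<gamma> 0 \<noteq> 0"
    using straight_edge_vec_nonzero[OF path] m by simp
  from is_Arg_diff_cases[OF this is_Arg_divide[OF last first] is_Arg_turning_straight[OF path m(1)]]
    t z'(2) abs_turning_less[OF path m(1)] \<phi> \<phi>'
  show False
    using eps_pos eps_le cw_angle_ge_0[of z "\<gamma> ! 0" "\<gamma> ! 1"] cw_angle_less_2pi[of z "\<gamma> ! 0" "\<gamma> ! 1"]
    unfolding admissible_angle_def opposite_iff abs_less_iff by (elim disjE conjE; linarith)
qed

lemma straight_snoc:
  assumes path: "straight \<gamma>" and edge: "{last \<gamma>, w} \<in> E"
    and opp: "opposite w (last \<gamma>) (\<gamma> ! (length \<gamma> - 2))"
  shows "straight (\<gamma> @ [w])"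
proof -
  let ?n = "length \<gamma>" and ?\<gamma> = "\<gamma> @ [w]"
  have n: "2 \<le> ?n" using straight_length[OF path] .
  then have "\<gamma> \<noteq> []" by auto
  then have last: "last \<gamma> = \<gamma> ! (?n - 1)" by (simp add: last_conv_nth)
  have old: "?\<gamma> ! i = \<gamma> ! i" if "i < ?n" for i using that by (simp add: nth_append)
  have idx: "?n - 1 < ?n" "Suc (?n - 1) = ?n" "?n - 1 - 1 = ?n - 2" "?n - 2 < ?n" using n by auto
  have "w \<noteq> last \<gamma>" using edge_vertices[OF edge] by auto
  moreover have "w \<noteq> \<gamma> ! (?n - 2)" using opp not_opposite_same by auto
  ultimately have "edges_distinct ?\<gamma>"
    by (rule edges_distinct_snoc[OF straight_distinct[OF path] n])
  moreover have "{?\<gamma> ! i, ?\<gamma> ! Suc i} \<in> E" if "Suc i < length ?\<gamma>" for i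
  proof (cases "Suc i < ?n")
    case True
    then show ?thesis using straight_edge[OF path True] old by simp
  next
    case False
    with that have "i = ?n - 1" by simp
    then have "?\<gamma> ! i = last \<gamma>" "?\<gamma> ! Suc i = w" using idx last by (simp_all add: nth_append)
    then show ?thesis using edge by simp
  qed
  moreover have "opposite (?\<gamma> ! Suc i) (?\<gamma> ! i) (?\<gamma> ! (i - 1))" if "0 < i" "Suc i < length ?\<gamma>" for i
  proof (cases "Suc i < ?n")
    case True
    then show ?thesis using straight_opposite[OF path that(1) True] old by simp
  next
    case False
    with that have "i = ?n - 1" by simp
    then have "?\<gamma> ! i = last \<gamma>" "?\<gamma> ! Suc i = w" "?\<gamma> ! (i - 1) = \<gamma> ! (?n - 2)"
      using idx last by (simp_all add: nth_append)
    then show ?thesis using opp by simp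
  qed
  moreover have "2 \<le> length ?\<gamma>" "set ?\<gamma> \<subseteq> V"
    using n straight_set[OF path] edge_vertices[OF edge] by auto
  ultimately show ?thesis unfolding straight_iff by blast
qed

lemma straight_rev:
  assumes path: "straight \<gamma>"
  shows "straight (rev \<gamma>)"
proof (rule straight_intro)
  let ?n = "length \<gamma>"
  show "2 \<le> length (rev \<gamma>)" "set (rev \<gamma>) \<subseteq> V" "distinct (rev \<gamma>)"
    using straight_length[OF path] straight_set[OF path] straight_distinct[OF path] by auto
  fix i
  assume i: "Suc i < length (rev \<gamma>)"
  have "rev \<gamma> ! i = \<gamma> ! Suc (?n - Suc (Suc i))" "rev \<gamma> ! Suc i = \<gamma> ! (?n - Suc (Suc i))"
    using i by (auto simp: rev_nth Suc_diff_Suc)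
  then show "{rev \<gamma> ! i, rev \<gamma> ! Suc i} \<in> E"
    using straight_edge[OF path, of "?n - Suc (Suc i)"] i by (simp add: insert_commute)
  assume "0 < i"
  then have "rev \<gamma> ! Suc i = \<gamma> ! (?n - Suc i - 1)" "rev \<gamma> ! i = \<gamma> ! (?n - Suc i)"
    "rev \<gamma> ! (i - 1) = \<gamma> ! Suc (?n - Suc i)"
    using i by (auto simp: rev_nth Suc_diff_Suc)
  moreover have "opposite (\<gamma> ! Suc (?n - Suc i)) (\<gamma> ! (?n - Suc i)) (\<gamma> ! (?n - Suc i - 1))"
    using straight_opposite[OF path, of "?n - Suc i"] i \<open>0 < i\<close> by auto
  ultimately show "opposite (rev \<gamma> ! Suc i) (rev \<gamma> ! i) (rev \<gamma> ! (i - 1))"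
    using opposite_sym by simp
qed

lemma straight_sublist:
  assumes path: "straight \<gamma>'" and "sublist \<gamma> \<gamma>'" "2 \<le> length \<gamma>"
  shows "straight \<gamma>"
proof -
  obtain a b where \<gamma>': "\<gamma>' = a @ \<gamma> @ b" using assms(2) unfolding sublist_def by blast
  let ?k = "length a"
  have nth: "\<gamma> ! i = \<gamma>' ! (?k + i)" if "i < length \<gamma>" for i
    using that \<gamma>' by (simp add: nth_append)
  show ?thesis
  proof (rule straight_intro)
    show "2 \<le> length \<gamma>" by fact
    show "set \<gamma> \<subseteq> V" "distinct \<gamma>"
      using straight_set[OF path] straight_distinct[OF path] \<gamma>' by auto
    fix i
    assume i: "Suc i < length \<gamma>"
    then have i': "Suc (?k + i) < length \<gamma>'" using \<gamma>' by simp
    show "{\<gamma> ! i, \<gamma> ! Suc i} \<in> E"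
      using straight_edge[OF path i'] nth[of i] nth[of "Suc i"] i by simp
    assume "0 < i"
    then show "opposite (\<gamma> ! Suc i) (\<gamma> ! i) (\<gamma> ! (i - 1))"
      using straight_opposite[OF path _ i'] nth[of i] nth[of "Suc i"] nth[of "i - 1"] i
      by (simp add: Suc_diff_Suc)
  qed
qed

lemma straight_sublist_nbr:
  assumes "straight \<mu>" "sublist [x, y] \<mu>"
  shows "y \<in> N x" "x \<in> N y"
  using straight_nbr[OF straight_sublist[OF assms], of 0] by auto

lemma straight_sublist_opposite:
  assumes "straight \<mu>" "sublist [a, x, b] \<mu>"
  shows "opposite b x a"
  using straight_opposite[OF straight_sublist[OF assms], of 1] by simp

lemma straight_snocD:
  assumes "straight (w @ [c])" "2 \<le> length w"
  shows "{last w, c} \<in> E" "opposite c (last w) (w ! (length w - 2))"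
proof -
  let ?n = "length w"
  have idx: "Suc (?n - 1) = ?n" "?n - 1 - 1 = ?n - 2" "?n - 2 < ?n" "?n - 1 < ?n" "0 < ?n - 1"
    using assms(2) by auto
  have "w \<noteq> []" using assms(2) by auto
  then have nth: "(w @ [c]) ! (?n - 1) = last w" "(w @ [c]) ! Suc (?n - 1) = c"
    "(w @ [c]) ! (?n - 1 - 1) = w ! (?n - 2)"
    using idx by (simp_all add: nth_append last_conv_nth)
  show "{last w, c} \<in> E" using straight_edge[OF assms(1), of "?n - 1"] nth idx by simp
  show "opposite c (last w) (w ! (?n - 2))"
    using straight_opposite[OF assms(1), of "?n - 1"] nth idx by simp
qed

lemma straight_extend_right:
  assumes "straight (a @ w)" "straight (w @ [c])" "2 \<le> length w"
  shows "straight (a @ w @ [c])"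
proof -
  have "w \<noteq> []" using assms(3) by auto
  then have "last (a @ w) = last w" by simp
  moreover have "length (a @ w) - 2 = length a + (length w - 2)" using assms(3) by simp
  then have "(a @ w) ! (length (a @ w) - 2) = w ! (length w - 2)" by (simp only: nth_append_length_plus)
  ultimately show ?thesis
    using straight_snoc[OF assms(1)] straight_snocD[OF assms(2,3)] by simp
qed

abbreviation maximal :: "complex list \<Rightarrow> bool" where
  "maximal \<equiv> maximal_straight \<epsilon> V E"

lemma maximal_iff: "maximal \<gamma> \<longleftrightarrow> straight \<gamma> \<and> (\<forall>w. \<not> straight (\<gamma> @ [w])) \<and> (\<forall>w. \<not> straight (w # \<gamma>))"
proof
  assume m: "maximal \<gamma>"
  have "\<not> straight \<gamma>'" if "sublist \<gamma> \<gamma>'" "length \<gamma>' \<noteq> length \<gamma>" for \<gamma>'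
  proof
    assume "straight \<gamma>'"
    moreover have "\<gamma>' \<noteq> \<gamma>" "\<gamma>' \<noteq> rev \<gamma>" using that(2) by auto
    ultimately show False using m that(1) unfolding maximal_straight_def Gamma_def by blast
  qed
  moreover have "sublist \<gamma> (\<gamma> @ [w])" "sublist \<gamma> (w # \<gamma>)" for w
    using sublist_append_rightI sublist_append_leftI[of \<gamma> "[w]"] by auto
  ultimately show "straight \<gamma> \<and> (\<forall>w. \<not> straight (\<gamma> @ [w])) \<and> (\<forall>w. \<not> straight (w # \<gamma>))"
    using m unfolding maximal_straight_def Gamma_def by auto
next
  assume h: "straight \<gamma> \<and> (\<forall>w. \<not> straight (\<gamma> @ [w])) \<and> (\<forall>w. \<not> straight (w # \<gamma>))"
  have n: "2 \<le> length \<gamma>" using h straight_length by blast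
  have no_super: "\<gamma>' = \<gamma>" if path': "straight \<gamma>'" and sub: "sublist \<gamma> \<gamma>'" for \<gamma>'
  proof (rule ccontr)
    assume "\<gamma>' \<noteq> \<gamma>"
    obtain a b where ab: "\<gamma>' = a @ \<gamma> @ b" using sub unfolding sublist_def by blast
    show False
    proof (cases b)
      case (Cons c b')
      then have "sublist (\<gamma> @ [c]) \<gamma>'" using ab sublist_appendI[of "\<gamma> @ [c]" a b'] by simp
      then have "straight (\<gamma> @ [c])" using straight_sublist[OF path'] n by simp
      with h show False by blast
    next
      case Nil
      then have "a \<noteq> []" using ab \<open>\<gamma>' \<noteq> \<gamma>\<close> by auto
      then have "\<gamma>' = butlast a @ (last a # \<gamma>) @ []" using ab Nil by simp
      then have "sublist (last a # \<gamma>) \<gamma>'" unfolding sublist_def by blast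
      then have "straight (last a # \<gamma>)" using straight_sublist[OF path'] n by simp
      with h show False by blast
    qed
  qed
  have "\<gamma>' = \<gamma> \<or> \<gamma>' = rev \<gamma>" if "straight \<gamma>'" "sublist \<gamma> \<gamma>' \<or> sublist \<gamma> (rev \<gamma>')" for \<gamma>'
    using that no_super[OF that(1)] no_super[OF straight_rev[OF that(1)]] by auto
  then show "maximal \<gamma>" using h unfolding maximal_straight_def Gamma_def by auto
qed

lemma maximal_straight: "maximal \<gamma> \<Longrightarrow> straight \<gamma>"
  using maximal_iff by blast

lemma maximal_rev:
  assumes "maximal \<gamma>"
  shows "maximal (rev \<gamma>)"
proof -
  have "\<not> straight (rev \<gamma> @ [w])" "\<not> straight (w # rev \<gamma>)" for w
    using assms straight_rev[of "rev \<gamma> @ [w]"] straight_rev[of "w # rev \<gamma>"] unfolding maximal_iff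
    by auto
  then show ?thesis using assms straight_rev unfolding maximal_iff by blast
qed

lemma straight_length_le_card:
  assumes "straight \<gamma>"
  shows "length \<gamma> \<le> card V"
proof -
  have "length \<gamma> = card (set \<gamma>)" using distinct_card[OF straight_distinct[OF assms]] by simp
  also have "\<dots> \<le> card V" using card_mono[OF finite_V straight_set[OF assms]] .
  finally show ?thesis .
qed

lemma maximal_extension: "straight \<gamma> \<Longrightarrow> \<exists>\<mu>. maximal \<mu> \<and> sublist \<gamma> \<mu>"
proof (induction \<gamma> rule: measure_induct_rule[of "\<lambda>\<gamma>. card V - length \<gamma>"])
  case (less \<gamma>)
  show ?case
  proof (cases "maximal \<gamma>")
    case False
    then have "(\<exists>w. straight (\<gamma> @ [w])) \<or> (\<exists>w. straight (w # \<gamma>))"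
      using less.prems unfolding maximal_iff by blast
    then obtain \<gamma>' where \<gamma>': "straight \<gamma>'" "sublist \<gamma> \<gamma>'" "length \<gamma>' = Suc (length \<gamma>)"
      using sublist_append_rightI sublist_append_leftI[of \<gamma> "[_]"] by fastforce
    then have "card V - length \<gamma>' < card V - length \<gamma>"
      using straight_length_le_card[OF \<gamma>'(1)] by simp
    then obtain \<mu> where "maximal \<mu>" "sublist \<gamma>' \<mu>" using less.IH \<gamma>'(1) by blast
    then show ?thesis using \<gamma>'(2) sublist_order.order_trans by blast
  qed blast
qed

text \<open>At each vertex the continuation is the unique bonded neighbour opposite to the previous
  vertex.\<close>
lemma straight_same_start_prefix:
  assumes p1: "straight \<mu>1" and p2: "straight \<mu>2" and start: "take 2 \<mu>1 = take 2 \<mu>2"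
  shows "prefix \<mu>1 \<mu>2 \<or> prefix \<mu>2 \<mu>1"
proof -
  let ?m = "min (length \<mu>1) (length \<mu>2)"
  have "take k \<mu>1 = take k \<mu>2" if "k \<le> ?m" for k
    using that
  proof (induction k)
    case 0
    then show ?case by simp
  next
    case (Suc k)
    show ?case
    proof (cases "k < 2")
      case True
      then show ?thesis using start by (metis Suc_leI min.absorb1 take_take)
    next
      case False
      then obtain j where k: "k = Suc (Suc j)" by (metis add_2_eq_Suc less_iff_Suc_add not_less_eq)
      have eq: "\<mu>1 ! i = \<mu>2 ! i" if "i < k" for i
        using Suc that by (metis Suc_leD nth_take)
      have len: "Suc (Suc j) < length \<mu>1" "Suc (Suc j) < length \<mu>2" using Suc.prems k by auto
      let ?v = "\<mu>1 ! Suc j" and ?u = "\<mu>1 ! j"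
      have v: "?v \<in> V" using straight_nth_in_V[OF p1] len by simp
      have "\<mu>1 ! k \<in> bonded ?v" "\<mu>2 ! k \<in> bonded ?v" "?u \<in> bonded ?v"
        using straight_nbr[OF p1 len(1)] straight_nbr[OF p2 len(2)] straight_nbr[OF p1, of j]
          eq[of "Suc j"] len k unfolding bonded_def by auto
      moreover have "opposite ?u ?v (\<mu>1 ! k)" "opposite ?u ?v (\<mu>2 ! k)"
        using straight_opposite[OF p1 _ len(1)] straight_opposite[OF p2 _ len(2)] eq[of "Suc j"] eq[of j]
          k opposite_sym by auto
      ultimately have "\<mu>1 ! k = \<mu>2 ! k" using opposite_unique[OF v] by blast
      then show ?thesis using Suc len k by (simp add: take_Suc_conv_app_nth)
    qed
  qed
  from this[of ?m] show ?thesis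
    by (metis min.cobounded1 min.cobounded2 min_def take_all take_is_prefix)
qed

lemma maximal_suffix_unique:
  assumes "maximal (a1 @ x # y # b1)" "maximal (a2 @ x # y # b2)"
  shows "b1 = b2"
proof -
  have not_strict: "\<not> strict_prefix b b'"
    if m: "maximal (a @ x # y # b)" and m': "maximal (a' @ x # y # b')" for a b a' b'
  proof
    assume "strict_prefix b b'"
    then obtain c r where b': "b' = b @ c # r"
      by (metis append_Nil2 neq_Nil_conv prefix_def strict_prefix_def)
    have "straight ((x # y # b) @ [c])"
      using straight_sublist[OF maximal_straight[OF m'], of "(x # y # b) @ [c]"] b'
        sublist_appendI[of "x # y # b @ [c]" a' r] by simp
    then have "straight (a @ (x # y # b) @ [c])"
      using straight_extend_right[of a "x # y # b" c] maximal_straight[OF m] by simp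
    then show False using m unfolding maximal_iff by simp
  qed
  have "straight (x # y # b1)" "straight (x # y # b2)"
    using assms[THEN maximal_straight] by (auto intro: straight_sublist)
  then have "prefix b1 b2 \<or> prefix b2 b1"
    using straight_same_start_prefix by fastforce
  then show ?thesis
    using not_strict[OF assms] not_strict[OF assms(2,1)] by (auto simp: strict_prefix_def)
qed

lemma maximal_unique:
  assumes "maximal \<mu>1" "maximal \<mu>2" "sublist [x, y] \<mu>1" "sublist [x, y] \<mu>2"
  shows "\<mu>1 = \<mu>2"
proof -
  obtain a1 b1 a2 b2 where \<mu>: "\<mu>1 = a1 @ x # y # b1" "\<mu>2 = a2 @ x # y # b2"
    using assms(3,4) unfolding sublist_def by auto
  have "b1 = b2" using maximal_suffix_unique assms(1,2) \<mu> by blast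
  moreover have "rev a1 = rev a2"
    using maximal_suffix_unique[of "rev b1" y x "rev a1" "rev b2" "rev a2"]
      maximal_rev[OF assms(1)] maximal_rev[OF assms(2)] \<mu> by simp
  ultimately show ?thesis using \<mu> by simp
qed

definition max_path :: "complex \<Rightarrow> complex \<Rightarrow> complex list" where
  "max_path x y = (THE \<mu>. maximal \<mu> \<and> sublist [x, y] \<mu>)"

lemma max_path_eqI: "maximal \<mu> \<Longrightarrow> sublist [x, y] \<mu> \<Longrightarrow> max_path x y = \<mu>"
  unfolding max_path_def using maximal_unique by blast

lemma max_path:
  assumes "{x, y} \<in> E"
  shows "maximal (max_path x y)" "sublist [x, y] (max_path x y)"
proof -
  obtain \<mu> where "maximal \<mu>" "sublist [x, y] \<mu>"
    using maximal_extension[OF straight_pair[OF assms]] by blast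
  then show "maximal (max_path x y)" "sublist [x, y] (max_path x y)"
    using max_path_eqI by auto
qed

lemma max_path_swap: "{x, y} \<in> E \<Longrightarrow> max_path y x = rev (max_path x y)"
  using max_path[of x y] maximal_rev by (intro max_path_eqI) (auto simp: sublist_rev_right)

section \<open>The strata through a vertex\<close>

lemma S_Gamma_iff: "s \<in> S_Gamma \<epsilon> V E \<longleftrightarrow> (\<exists>\<mu>. maximal \<mu> \<and> s = upath \<mu>)"
  unfolding S_Gamma_def by auto

lemma finite_S_Gamma: "finite (S_Gamma \<epsilon> V E)"
proof -
  have "set \<mu> \<subseteq> V \<and> length \<mu> \<le> card V" if "maximal \<mu>" for \<mu>
    using straight_set[OF maximal_straight[OF that]] straight_length_le_card[OF maximal_straight[OF that]]
    by simp
  then have "{\<mu>. maximal \<mu>} \<subseteq> {\<mu>. set \<mu> \<subseteq> V \<and> length \<mu> \<le> card V}" by blast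
  from finite_subset[OF this finite_lists_length_le[OF finite_V]]
  have "finite {\<mu>. maximal \<mu>}" .
  then show ?thesis unfolding S_Gamma_def by simp
qed

definition stratum :: "complex \<Rightarrow> complex \<Rightarrow> complex list set" where
  "stratum x y = upath (max_path x y)"

lemma stratum_in_S_Gamma: "y \<in> N x \<Longrightarrow> stratum x y \<in> S_Gamma \<epsilon> V E"
  unfolding in_nbr_iff stratum_def S_Gamma_iff using max_path(1) by blast

lemma in_spts_stratum: "y \<in> N x \<Longrightarrow> x \<in> spts (stratum x y)"
  unfolding in_nbr_iff stratum_def spts_upath using set_mono_sublist[OF max_path(2)] by force

lemma strata_at_vertex: "{s \<in> S_Gamma \<epsilon> V E. x \<in> spts s} = stratum x ` N x"
proof
  show "stratum x ` N x \<subseteq> {s \<in> S_Gamma \<epsilon> V E. x \<in> spts s}"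
    using stratum_in_S_Gamma in_spts_stratum by auto
  show "{s \<in> S_Gamma \<epsilon> V E. x \<in> spts s} \<subseteq> stratum x ` N x"
  proof clarify
    fix s assume "s \<in> S_Gamma \<epsilon> V E" "x \<in> spts s"
    then obtain \<mu> where \<mu>: "maximal \<mu>" "s = upath \<mu>" "x \<in> set \<mu>"
      unfolding S_Gamma_iff by (auto simp: spts_upath)
    note path = maximal_straight[OF \<mu>(1)]
    obtain as bs where split: "\<mu> = as @ x # bs" using split_list[OF \<mu>(3)] by blast
    show "s \<in> stratum x ` N x"
    proof (cases bs)
      case (Cons y bs')
      then have sub: "sublist [x, y] \<mu>" using split sublist_appendI[of "[x, y]" as bs'] by simp
      then have "s = stratum x y" using max_path_eqI[OF \<mu>(1) sub] \<mu>(2) unfolding stratum_def by simp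
      with straight_sublist_nbr(1)[OF path sub] show ?thesis by blast
    next
      case Nil
      then have "as \<noteq> []" using split straight_length[OF path] by auto
      then have "\<mu> = butlast as @ [last as, x] @ []" using split Nil by simp
      then have sub: "sublist [last as, x] \<mu>" unfolding sublist_def by blast
      have "{last as, x} \<in> E" using straight_sublist_nbr(1)[OF path sub] in_nbr_iff by blast
      then have "max_path x (last as) = rev \<mu>" using max_path_swap max_path_eqI[OF \<mu>(1) sub] by metis
      then have "s = stratum x (last as)" using \<mu>(2) unfolding stratum_def by (simp add: upath_rev)
      with straight_sublist_nbr(2)[OF path sub] show ?thesis by blast
    qed
  qed
qed

lemma stratum_eq_if_opposite:
  assumes y: "y \<in> N x" and y': "y' \<in> N x" and o: "opposite y x y'"
  shows "stratum x y = stratum x y'"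
proof -
  have "y \<noteq> y'" using o not_opposite_same by blast
  moreover have "{y, x} \<in> E" "{x, y'} \<in> E" "y \<noteq> x" "x \<noteq> y'" "x \<in> V"
    using y y' in_nbr_iff edge_vertices by (auto simp: insert_commute)
  ultimately have "straight [y, x, y']"
    using y y' opposite_sym[OF o] in_nbr_iff
    by (intro straight_intro) (auto simp: less_Suc_eq nth_Cons')
  then obtain \<mu> where \<mu>: "maximal \<mu>" "sublist [y, x, y'] \<mu>" using maximal_extension by blast
  have "sublist [y, x] [y, x, y']" "sublist [x, y'] [y, x, y']"
    using sublist_appendI[of "[y, x]" "[]" "[y']"] sublist_appendI[of "[x, y']" "[y]" "[]"] by simp_all
  then have "sublist [y, x] \<mu>" "sublist [x, y'] \<mu>"
    using sublist_order.order_trans[OF _ \<mu>(2)] by blast+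
  then have "max_path x y' = \<mu>" "max_path y x = \<mu>" using max_path_eqI[OF \<mu>(1)] by blast+
  moreover have "{y, x} \<in> E" using y in_nbr_iff by (simp add: insert_commute)
  then have "max_path x y = rev (max_path y x)" by (rule max_path_swap)
  ultimately show ?thesis unfolding stratum_def by (simp add: upath_rev)
qed

lemma stratum_eq_iff:
  assumes y: "y \<in> N x" and y': "y' \<in> N x"
  shows "stratum x y = stratum x y' \<longleftrightarrow> y = y' \<or> opposite y x y'"
proof
  have e: "{x, y} \<in> E" "{x, y'} \<in> E" using y y' in_nbr_iff by auto
  let ?\<mu> = "max_path x y'"
  have m: "maximal ?\<mu>" using max_path(1)[OF e(2)] .
  have d: "distinct ?\<mu>" using straight_distinct[OF maximal_straight[OF m]] .
  assume "stratum x y = stratum x y'"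
  then have "?\<mu> = max_path x y \<or> ?\<mu> = max_path y x"
    using max_path_swap[OF e(1)] unfolding stratum_def upath_eq_iff by auto
  then show "y = y' \<or> opposite y x y'"
  proof
    assume "?\<mu> = max_path x y"
    then have "sublist [x, y] ?\<mu>" using max_path(2)[OF e(1)] by simp
    then show ?thesis using distinct_sublist_pair_eq[OF d _ max_path(2)[OF e(2)]] by blast
  next
    assume "?\<mu> = max_path y x"
    then have "sublist [y, x] ?\<mu>" using max_path(2)[of y x] e(1) by (simp add: insert_commute)
    from distinct_sublist_pairs_join[OF d this max_path(2)[OF e(2)]]
    have "opposite y' x y" by (rule straight_sublist_opposite[OF maximal_straight[OF m]])
    then show ?thesis using opposite_sym by blast
  qed
qed (use stratum_eq_if_opposite[OF y y'] in blast)

lemma card_stratum_image_le_2: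
  assumes x: "x \<in> V"
  shows "card (stratum x ` N x) \<le> 2"
proof (rule card_le_2_if_no_three)
  show "finite (stratum x ` N x)" using finite_nbr by simp
  fix s1 s2 s3 assume s: "s1 \<in> stratum x ` N x" "s2 \<in> stratum x ` N x" "s3 \<in> stratum x ` N x"
    "s1 \<noteq> s2" "s2 \<noteq> s3" "s1 \<noteq> s3"
  then obtain a b c where abc: "a \<in> N x" "b \<in> N x" "c \<in> N x"
    "s1 = stratum x a" "s2 = stratum x b" "s3 = stratum x c" by blast
  then have "stratum x a \<noteq> stratum x b" "stratum x b \<noteq> stratum x c" "stratum x a \<noteq> stratum x c"
    using s(4-6) by simp_all
  then have "\<not> opposite a x b" "\<not> opposite b x c" "\<not> opposite a x c" "a \<noteq> b" "b \<noteq> c" "a \<noteq> c"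
    unfolding stratum_eq_iff[OF abc(1,2)] stratum_eq_iff[OF abc(2,3)] stratum_eq_iff[OF abc(1,3)]
    by simp_all
  moreover have "a \<in> bonded x" "b \<in> bonded x" "c \<in> bonded x" using abc unfolding bonded_def by auto
  ultimately show False using three_bonded_opposite[OF x] by blast
qed

lemma card_stratum_fibre_le_2:
  assumes x: "x \<in> V"
  shows "card {y \<in> N x. stratum x y = s} \<le> 2"
proof (rule card_le_2_if_no_three)
  show "finite {y \<in> N x. stratum x y = s}" using finite_nbr by simp
  fix a b c assume abc: "a \<in> {y \<in> N x. stratum x y = s}" "b \<in> {y \<in> N x. stratum x y = s}"
    "c \<in> {y \<in> N x. stratum x y = s}" "a \<noteq> b" "b \<noteq> c" "a \<noteq> c"
  then have N: "a \<in> N x" "b \<in> N x" "c \<in> N x" and "stratum x a = stratum x b" "stratum x a = stratum x c"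
    by simp_all
  then have "opposite a x b" "opposite a x c"
    using abc(4,6) unfolding stratum_eq_iff[OF N(1,2)] stratum_eq_iff[OF N(1,3)] by simp_all
  moreover have "a \<in> bonded x" "b \<in> bonded x" "c \<in> bonded x" using abc unfolding bonded_def by auto
  ultimately show False using opposite_unique[OF x] abc(5) by blast
qed

lemma card_nbr_le_twice_strata:
  assumes x: "x \<in> V"
  shows "card (N x) \<le> 2 * card (stratum x ` N x)"
proof -
  have "card (N x) = (\<Sum>s\<in>stratum x ` N x. card {y \<in> N x. stratum x y = s})"
    using card_eq_sum sum.group[of "N x" "stratum x ` N x" "stratum x" "\<lambda>_. 1::nat"] finite_nbr by simp
  also have "\<dots> \<le> (\<Sum>s\<in>stratum x ` N x. 2)" by (intro sum_mono card_stratum_fibre_le_2[OF x])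
  finally show ?thesis by simp
qed

lemma in_V2pi_iff:
  assumes x: "x \<in> V" and ab: "N x = {a, b}" "a \<noteq> b"
  shows "x \<in> V2pi \<epsilon> V E \<longleftrightarrow> opposite a x b"
proof -
  have "x \<in> Vdeg V E 2" using x ab unfolding Vdeg_def by simp
  moreover have "opposite x1 x x2 \<longleftrightarrow> opposite a x b" if "{x1, x2} = {a, b}" for x1 x2
    using that opposite_sym[of x1 x x2] opposite_sym[of x2 x x1] by (auto simp: doubleton_eq_iff)
  ultimately show ?thesis using ab unfolding V2pi_def opposite_def[symmetric] by blast
qed

lemma card_nbr_V2pi: "x \<in> V2pi \<epsilon> V E \<Longrightarrow> card (N x) = 2"
  unfolding V2pi_def Vdeg_def by auto

text \<open>Each stratum of S_Gamma through x carries one or two bonds of x; the singleton strata make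
  up the difference to two.\<close>
lemma strata_count_at_vertex:
  assumes x: "x \<in> V"
  shows "card (stratum x ` N x) + (if x \<in> Vdeg V E 0 then 2 else 0)
         + (if x \<in> Vdeg V E 1 \<union> V2pi \<epsilon> V E then 1 else 0) = 2"
proof -
  consider "card (N x) = 0" | "card (N x) = 1" | "card (N x) = 2" | "3 \<le> card (N x)" by linarith
  then show ?thesis
  proof cases
    case 1
    then have "N x = {}" using finite_nbr by simp
    with 1 x show ?thesis using card_nbr_V2pi[of x] unfolding Vdeg_def by auto
  next
    case 2
    then obtain y where "N x = {y}" using card_1_singletonE by blast
    with 2 x show ?thesis unfolding Vdeg_def by auto
  next
    case 3
    then obtain a b where ab: "N x = {a, b}" "a \<noteq> b" by (meson card_2_iff)
    have deg: "x \<notin> Vdeg V E 0" "x \<notin> Vdeg V E 1" using 3 unfolding Vdeg_def by auto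
    have eq: "stratum x a = stratum x b \<longleftrightarrow> opposite a x b"
      using stratum_eq_iff[of a x b] ab by simp
    moreover have "card (stratum x ` N x) = (if opposite a x b then 1 else 2)"
    proof (cases "opposite a x b")
      case True
      then have "stratum x a = stratum x b" using eq by simp
      then show ?thesis using ab True by simp
    next
      case False
      then have "stratum x a \<noteq> stratum x b" using eq by simp
      then show ?thesis using ab False by simp
    qed
    ultimately show ?thesis using deg in_V2pi_iff[OF x ab] by simp
  next
    case 4
    then have "card (stratum x ` N x) = 2"
      using card_stratum_image_le_2[OF x] card_nbr_le_twice_strata[OF x] by linarith
    moreover have "x \<notin> Vdeg V E 0" "x \<notin> Vdeg V E 1" "x \<notin> V2pi \<epsilon> V E"
      using 4 card_nbr_V2pi unfolding Vdeg_def by auto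
    ultimately show ?thesis by simp
  qed
qed

lemma finite_Vdeg: "finite (Vdeg V E i)"
  using finite_V unfolding Vdeg_def by simp

lemma finite_V2pi: "finite (V2pi \<epsilon> V E)"
  using finite_Vdeg unfolding V2pi_def by simp

lemma size_strata_at_vertex:
  assumes x: "x \<in> V"
  shows "size (filter_mset (\<lambda>t. x \<in> spts t) (strata \<epsilon> V E)) = 2"
proof -
  have "size (filter_mset (\<lambda>t. x \<in> spts t) (mset_set (S_Gamma \<epsilon> V E))) = card (stratum x ` N x)"
    using finite_S_Gamma strata_at_vertex by simp
  then have "size (filter_mset (\<lambda>t. x \<in> spts t) (strata \<epsilon> V E)) = card (stratum x ` N x)
      + (if x \<in> Vdeg V E 0 then 1 else 0) + (if x \<in> Vdeg V E 0 then 1 else 0)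
      + (if x \<in> Vdeg V E 1 \<union> V2pi \<epsilon> V E then 1 else 0)"
    unfolding strata_def filter_union_mset size_union
    using size_filter_upath_singletons[OF finite_Vdeg] size_filter_upath_singletons[OF finite_Un[THEN iffD2,
        OF conjI[OF finite_Vdeg finite_V2pi]]] by presburger
  also have "\<dots> = 2" using strata_count_at_vertex[OF x] by (auto split: if_splits)
  finally show ?thesis .
qed

lemma strata_slen_spts:
  assumes "s \<in># strata \<epsilon> V E"
  shows "slen s = card (spts s)" "spts s \<subseteq> V"
proof -
  have "Vdeg V E 0 \<union> (Vdeg V E 1 \<union> V2pi \<epsilon> V E) \<subseteq> V" unfolding V2pi_def Vdeg_def by auto
  then have "s \<in> S_Gamma \<epsilon> V E \<or> (\<exists>x \<in> V. s = upath [x])"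
    using assms finite_S_Gamma finite_Vdeg finite_V2pi unfolding strata_def by auto
  then have "slen s = card (spts s) \<and> spts s \<subseteq> V"
  proof
    assume "s \<in> S_Gamma \<epsilon> V E"
    then obtain \<mu> where m: "maximal \<mu>" and s: "s = upath \<mu>" unfolding S_Gamma_iff by blast
    from m have "straight \<mu>" by (rule maximal_straight)
    then show ?thesis
      using straight_set distinct_card[OF straight_distinct] s by (simp add: slen_upath spts_upath)
  qed (auto simp: slen_upath spts_upath)
  then show "slen s = card (spts s)" "spts s \<subseteq> V" by simp_all
qed

lemma sum_slen_strata: "(\<Sum>s \<in># strata \<epsilon> V E. slen s) = 2 * card V"
proof -
  have "(\<Sum>s \<in># strata \<epsilon> V E. slen s) = (\<Sum>s \<in># strata \<epsilon> V E. card (spts s))"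
    by (intro arg_cong[where f = sum_mset] image_mset_cong strata_slen_spts(1))
  also have "\<dots> = (\<Sum>x\<in>V. size (filter_mset (\<lambda>t. x \<in> spts t) (strata \<epsilon> V E)))"
    using strata_slen_spts(2) by (intro sum_mset_card_eq_sum_size_filter finite_V) blast
  also have "\<dots> = 2 * card V" using size_strata_at_vertex by simp
  finally show ?thesis .
qed

lemma two_strata_at_vertex:
  assumes "x \<in> V"
  shows "\<exists>s s'. filter_mset (\<lambda>t. x \<in> spts t) (strata \<epsilon> V E) = {#s, s'#} \<and> s' \<in># strata_perp \<epsilon> V E s"
proof -
  obtain s s' where F: "filter_mset (\<lambda>t. x \<in> spts t) (strata \<epsilon> V E) = {#s, s'#}"
    and s': "s' \<in># strata \<epsilon> V E - {#s#}"
    using size_filter_mset_eq_2[OF size_strata_at_vertex[OF assms]] by blast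
  have "s \<in># filter_mset (\<lambda>t. x \<in> spts t) (strata \<epsilon> V E)"
    "s' \<in># filter_mset (\<lambda>t. x \<in> spts t) (strata \<epsilon> V E)" using F by simp_all
  then have "x \<in> spts s" "x \<in> spts s'" by simp_all
  then have "s' \<in># strata_perp \<epsilon> V E s" using s' unfolding strata_perp_def set_mset_filter by blast
  then show ?thesis using F by blast
qed

section \<open>Counting bonds\<close>

lemma arc_of_maximal:
  assumes "maximal \<nu>" "sublist [x, y] \<nu>"
  shows "(x, y) \<in> Sigma V N" "stratum x y = upath \<nu>"
proof -
  have path: "straight \<nu>" using maximal_straight[OF assms(1)] .
  have "x \<in> set \<nu>" using set_mono_sublist[OF assms(2)] by simp
  then show "(x, y) \<in> Sigma V N" using straight_set[OF path] straight_sublist_nbr(1)[OF path assms(2)] by auto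
  show "stratum x y = upath \<nu>" unfolding stratum_def using max_path_eqI[OF assms] by simp
qed

lemma arcs_of_stratum:
  assumes m: "maximal \<mu>"
  shows "{p \<in> Sigma V N. case_prod stratum p = upath \<mu>}
    = {(x, y). sublist [x, y] \<mu> \<or> sublist [x, y] (rev \<mu>)}"
proof (intro equalityI subsetI)
  fix p assume "p \<in> {p \<in> Sigma V N. case_prod stratum p = upath \<mu>}"
  then obtain x y where p: "p = (x, y)" "y \<in> N x" "stratum x y = upath \<mu>" by auto
  then have "{x, y} \<in> E" "max_path x y = \<mu> \<or> max_path x y = rev \<mu>"
    using in_nbr_iff unfolding stratum_def upath_eq_iff by auto
  then show "p \<in> {(x, y). sublist [x, y] \<mu> \<or> sublist [x, y] (rev \<mu>)}"
    using max_path(2) p(1) by fastforce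
next
  fix p assume "p \<in> {(x, y). sublist [x, y] \<mu> \<or> sublist [x, y] (rev \<mu>)}"
  then obtain x y where p: "p = (x, y)" "sublist [x, y] \<mu> \<or> sublist [x, y] (rev \<mu>)" by auto
  then show "p \<in> {p \<in> Sigma V N. case_prod stratum p = upath \<mu>}"
    using arc_of_maximal[OF m] arc_of_maximal[OF maximal_rev[OF m]] by (auto simp: upath_rev)
qed

lemma sum_card_nbr: "(\<Sum>x\<in>V. card (N x)) = (\<Sum>s\<in>S_Gamma \<epsilon> V E. 2 * (slen s - 1))"
proof -
  have fin: "finite (Sigma V N)" using finite_V finite_nbr by simp
  have "case_prod stratum ` Sigma V N \<subseteq> S_Gamma \<epsilon> V E" using stratum_in_S_Gamma by auto
  then have "card (Sigma V N) = (\<Sum>s\<in>S_Gamma \<epsilon> V E. card {p \<in> Sigma V N. case_prod stratum p = s})"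
    using card_eq_sum sum.group[OF fin finite_S_Gamma, of "case_prod stratum" "\<lambda>_. 1::nat"] by simp
  also have "\<dots> = (\<Sum>s\<in>S_Gamma \<epsilon> V E. 2 * (slen s - 1))"
  proof (rule sum.cong[OF refl])
    fix s assume "s \<in> S_Gamma \<epsilon> V E"
    then obtain \<mu> where m: "maximal \<mu>" and s: "s = upath \<mu>" unfolding S_Gamma_iff by blast
    show "card {p \<in> Sigma V N. case_prod stratum p = s} = 2 * (slen s - 1)"
      unfolding s arcs_of_stratum[OF m] slen_upath
      using card_sublist_pairs straight_distinct[OF maximal_straight[OF m]] by blast
  qed
  finally show ?thesis using card_SigmaI[OF finite_V, of N] finite_nbr by simp
qed

text \<open>The substrate neighbour of x already continues the bond from y, so the maximal straight
  path through x and y cannot extend beyond x.\<close>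
lemma anchored_max_path_start:
  assumes y: "y \<in> N x" and anch: "anchored x y"
  shows "\<exists>r. max_path x y = x # y # r"
proof -
  have e: "{x, y} \<in> E" using y in_nbr_iff by blast
  have x: "x \<in> V" using edge_vertices[OF e] by blast
  let ?\<mu> = "max_path x y"
  have path: "straight ?\<mu>" using maximal_straight[OF max_path(1)[OF e]] .
  obtain a b where \<mu>: "?\<mu> = a @ x # y # b" using max_path(2)[OF e] unfolding sublist_def by auto
  have "a = []"
  proof (rule ccontr)
    assume "a \<noteq> []"
    then have "?\<mu> = butlast a @ [last a, x, y] @ b" using \<mu> by simp
    then have sub: "sublist [last a, x, y] ?\<mu>" unfolding sublist_def by blast
    then have w: "last a \<in> N x" "opposite y x (last a)"
      using straight_sublist_opposite[OF path] straight_sublist_nbr(2)[OF path]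
        sublist_order.order_trans[OF sublist_appendI[of "[last a, x]" "[]" "[y]"]] by auto
    obtain z where z: "z \<in> N_sub x" "opposite z x y" using anch unfolding anchored_def by blast
    have "last a \<in> bonded x" "y \<in> bonded x" "z \<in> bonded x" using w y z unfolding bonded_def by auto
    then have "last a = z" using opposite_unique[OF x] w(2) opposite_sym[OF z(2)] by blast
    then show False using nbr_not_substrate_nbr w(1) z(1) by blast
  qed
  then show ?thesis using \<mu> by simp
qed

abbreviation anchored_arcs :: "(complex \<times> complex) set" where
  "anchored_arcs \<equiv> {(x, y) \<in> Sigma V N. anchored x y}"

abbreviation interacting_strata :: "complex list set set" where
  "interacting_strata \<equiv> {s \<in> S_Gamma \<epsilon> V E. interacting \<epsilon> r0 s}"

lemma stratum_of_anchored_start: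
  assumes m: "maximal \<mu>" and anch: "anchored (\<mu> ! 0) (\<mu> ! 1)"
  shows "upath \<mu> \<in> case_prod stratum ` anchored_arcs"
proof -
  have "2 \<le> length \<mu>" using straight_length[OF maximal_straight[OF m]] .
  then have sub: "sublist [\<mu> ! 0, \<mu> ! 1] \<mu>" unfolding sublist_pair_iff_nth by (intro exI[of _ 0]) simp
  then have "(\<mu> ! 0, \<mu> ! 1) \<in> anchored_arcs" "stratum (\<mu> ! 0) (\<mu> ! 1) = upath \<mu>"
    using arc_of_maximal[OF m sub] anch by auto
  then show ?thesis by force
qed

lemma anchored_arcs_stratum_image: "case_prod stratum ` anchored_arcs = interacting_strata"
proof (intro equalityI subsetI)
  fix s assume "s \<in> case_prod stratum ` anchored_arcs"
  then obtain x y where xy: "y \<in> N x" "anchored x y" "s = stratum x y" by auto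
  then obtain r where "max_path x y = x # y # r" using anchored_max_path_start by blast
  then have "interacting \<epsilon> r0 s"
    using xy interacting_upath_iff[of "x # y # r"] unfolding stratum_def by simp
  then show "s \<in> interacting_strata" using stratum_in_S_Gamma xy by simp
next
  fix s assume "s \<in> interacting_strata"
  then obtain \<mu> where m: "maximal \<mu>" and s: "s = upath \<mu>" and int: "interacting \<epsilon> r0 s"
    unfolding S_Gamma_iff by blast
  have n: "2 \<le> length \<mu>" using straight_length[OF maximal_straight[OF m]] .
  then show "s \<in> case_prod stratum ` anchored_arcs"
    using rev_nth_ends[OF n] int interacting_upath_iff[OF n] stratum_of_anchored_start[OF m]
      stratum_of_anchored_start[OF maximal_rev[OF m]] unfolding s upath_rev by auto
qed

lemma inj_on_stratum_anchored_arcs: "inj_on (case_prod stratum) anchored_arcs"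
proof (rule inj_onI, clarify)
  fix x y x' y' assume xy: "y \<in> N x" "anchored x y" and xy': "y' \<in> N x'" "anchored x' y'"
    and eq: "stratum x y = stratum x' y'"
  obtain r where \<mu>: "max_path x y = x # y # r" using anchored_max_path_start xy by blast
  obtain r' where \<mu>': "max_path x' y' = x' # y' # r'" using anchored_max_path_start xy' by blast
  have path: "straight (x # y # r)"
    using \<mu> maximal_straight max_path(1) xy(1) in_nbr_iff by metis
  have "x' # y' # r' = x # y # r \<or> x' # y' # r' = rev (x # y # r)"
    using eq \<mu> \<mu>' unfolding stratum_def upath_eq_iff by auto
  then show "x = x' \<and> y = y'"
  proof
    assume "x' # y' # r' = rev (x # y # r)"
    then have "rev (x' # y' # r') = x # y # r" by simp
    then have split: "x # y # r = rev r' @ [y', x']" by simp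
    have "anchored (last (x # y # r)) ((x # y # r) ! (length (x # y # r) - 2))"
      using xy'(2) unfolding split by (simp add: nth_append)
    moreover have "N_sub ((x # y # r) ! 0) \<noteq> {}" using xy(2) unfolding anchored_def by auto
    ultimately show ?thesis using anchored_end_no_substrate_start[OF path] by blast
  qed simp
qed

lemma card_interacting_strata: "card interacting_strata = (\<Sum>x\<in>V. card {y \<in> N x. anchored x y})"
proof -
  have "card interacting_strata = card anchored_arcs"
    using card_image[OF inj_on_stratum_anchored_arcs] anchored_arcs_stratum_image by simp
  also have "anchored_arcs = Sigma V (\<lambda>x. {y \<in> N x. anchored x y})" by auto
  also have "card \<dots> = (\<Sum>x\<in>V. card {y \<in> N x. anchored x y})"
    using card_SigmaI[OF finite_V, of "\<lambda>x. {y \<in> N x. anchored x y}"] finite_nbr by simp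
  finally show ?thesis .
qed

lemma leaf_not_on_interacting_stratum:
  assumes x: "x \<in> V" and leaf: "N x = {y}" and z: "z \<in> N_sub x" and no: "\<not> opposite z x y"
  shows "\<not> (\<exists>s \<in> S_Gamma \<epsilon> V E. interacting \<epsilon> r0 s \<and> x \<in> spts s)"
proof
  assume "\<exists>s \<in> S_Gamma \<epsilon> V E. interacting \<epsilon> r0 s \<and> x \<in> spts s"
  then obtain s where s: "s \<in> interacting_strata" "x \<in> spts s" by blast
  then have "s \<in> case_prod stratum ` anchored_arcs" unfolding anchored_arcs_stratum_image by simp
  then obtain x' y' where xy': "y' \<in> N x'" "anchored x' y'" "s = stratum x' y'" by blast
  obtain r where \<mu>: "max_path x' y' = x' # y' # r" using anchored_max_path_start xy' by blast
  let ?\<mu> = "x' # y' # r"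
  have "maximal (max_path x' y')" using max_path(1) xy'(1) in_nbr_iff by blast
  then have path: "straight ?\<mu>" using maximal_straight \<mu> by simp
  have "x \<in> set ?\<mu>" using s(2) xy'(3) \<mu> unfolding stratum_def by (simp add: spts_upath)
  then obtain as bs where split: "?\<mu> = as @ x # bs" by (meson split_list)
  consider "as = []" | "bs = []" | "as \<noteq> []" "bs \<noteq> []" by blast
  then show False
  proof cases
    case 1
    then have "x' = x" "y' \<in> N x" using split xy'(1) by auto
    then obtain z' where "z' \<in> N_sub x" "opposite z' x y" using xy'(2) leaf unfolding anchored_def by auto
    then show False using substrate_nbr_unique[OF x z] no by blast
  next
    case 2
    have "anchored (last (rev ?\<mu>)) (rev ?\<mu> ! (length (rev ?\<mu>) - 2))"
      using xy'(2) rev_nth_ends[of ?\<mu>] by simp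
    moreover have "rev ?\<mu> ! 0 = x" using split 2 by simp
    ultimately show False using anchored_end_no_substrate_start[OF straight_rev[OF path]] z by auto
  next
    case 3
    then have "?\<mu> = butlast as @ [last as, x, hd bs] @ tl bs" using split by simp
    then have "sublist [last as, x, hd bs] ?\<mu>" unfolding sublist_def by blast
    then have three: "straight [last as, x, hd bs]" using straight_sublist[OF path] by simp
    then have "last as \<in> N x" "hd bs \<in> N x" "last as \<noteq> hd bs"
      using straight_nbr[OF three, of 0] straight_nbr[OF three, of 1] straight_distinct[OF three] by auto
    then show False using leaf by auto
  qed
qed

abbreviation interacting_points :: "complex set" where
  "interacting_points \<equiv> {x \<in> Vdeg V E 0 \<union> V2pi \<epsilon> V E. N_sub x \<noteq> {}}"

abbreviation interacting_leaves :: "complex set" where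
  "interacting_leaves \<equiv> {x \<in> Vdeg V E 1. N_sub x \<noteq> {} \<and>
     \<not> (\<exists>s \<in> S_Gamma \<epsilon> V E. interacting \<epsilon> r0 s \<and> x \<in> spts s)}"

lemma nbrs_opposite_if_not_anchored:
  assumes x: "x \<in> V" and z: "z \<in> N_sub x" and no: "\<forall>y \<in> N x. \<not> opposite z x y"
    and ab: "a \<in> N x" "b \<in> N x" "a \<noteq> b"
  shows "opposite a x b"
proof -
  have "z \<in> bonded x" "a \<in> bonded x" "b \<in> bonded x" using z ab unfolding bonded_def by simp_all
  moreover have "z \<noteq> a" "z \<noteq> b" using nbr_not_substrate_nbr[OF _ z] ab by auto
  ultimately have "opposite z x a \<or> opposite a x b \<or> opposite z x b"
    using three_bonded_opposite[OF x] ab(3) by simp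
  then show ?thesis using no ab(1,2) by simp
qed

lemma card_substrate_nbr_at_anchored_vertex:
  assumes x: "x \<in> V" and z: "z \<in> N_sub x" and y: "y \<in> N x" "opposite z x y"
  shows "card {y \<in> N x. anchored x y} = 1" "x \<notin> interacting_points" "x \<notin> interacting_leaves"
proof -
  have zb: "z \<in> bonded x" using z unfolding bonded_def by simp
  have sub: "N_sub x = {z}" using substrate_nbr_unique[OF x z] z by blast
  have uniq: "w = y" if "w \<in> N x" "opposite z x w" for w
  proof -
    have "y \<in> bonded x" "w \<in> bonded x" using y(1) that(1) unfolding bonded_def by simp_all
    then show ?thesis using opposite_unique[OF x zb] y(2) that(2) by simp
  qed
  have "{w \<in> N x. anchored x w} = {y}"
  proof (intro equalityI subsetI)
    fix w assume "w \<in> {w \<in> N x. anchored x w}"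
    then have "w \<in> N x" "opposite z x w" unfolding anchored_def sub by auto
    then show "w \<in> {y}" using uniq by blast
  qed (use y in \<open>auto simp: anchored_def sub\<close>)
  then show "card {y \<in> N x. anchored x y} = 1" by simp
  have "x \<notin> V2pi \<epsilon> V E"
  proof
    assume v: "x \<in> V2pi \<epsilon> V E"
    then have "card (N x) = 2" by (rule card_nbr_V2pi)
    then obtain a b where ab: "N x = {a, b}" "a \<noteq> b" unfolding card_2_iff by blast
    then have o: "opposite a x b" using in_V2pi_iff[OF x] v by simp
    have "y = a \<or> y = b" using y(1) ab(1) by simp
    then obtain w where w: "w \<in> N x" "opposite y x w"
      using ab o opposite_sym[OF o] by auto
    have "z \<noteq> w" using nbr_not_substrate_nbr[OF w(1) z] by simp
    moreover have "y \<in> bonded x" "w \<in> bonded x" using y(1) w(1) unfolding bonded_def by simp_all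
    then have "w = z" using opposite_unique[OF x _ _ zb w(2) opposite_sym[OF y(2)]] by simp
    ultimately show False by simp
  qed
  moreover have "x \<notin> Vdeg V E 0" using y(1) finite_nbr unfolding Vdeg_def by auto
  ultimately show "x \<notin> interacting_points" by simp
  have "(x, y) \<in> anchored_arcs" using x y z unfolding anchored_def by auto
  then have "stratum x y \<in> case_prod stratum ` anchored_arcs" by (rule rev_image_eqI) simp
  then have "stratum x y \<in> interacting_strata" unfolding anchored_arcs_stratum_image .
  then show "x \<notin> interacting_leaves" using in_spts_stratum[OF y(1)] by blast
qed

lemma unanchored_vertex_interacting_singleton:
  assumes x: "x \<in> V" and z: "z \<in> N_sub x" and no: "\<forall>y \<in> N x. \<not> opposite z x y"
  shows "(if x \<in> interacting_points then 1 else 0) + (if x \<in> interacting_leaves then 1 else 0) = (1::nat)"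
proof -
  have opp: "opposite a x b" if "a \<in> N x" "b \<in> N x" "a \<noteq> b" for a b
    using nbrs_opposite_if_not_anchored[OF x z no] that by blast
  have "card (N x) \<le> 2"
  proof (rule card_le_2_if_no_three[OF finite_nbr])
    fix a b c assume abc: "a \<in> N x" "b \<in> N x" "c \<in> N x" "a \<noteq> b" "b \<noteq> c" "a \<noteq> c"
    then have "a \<in> bonded x" "b \<in> bonded x" "c \<in> bonded x" unfolding bonded_def by auto
    then show False using opposite_unique[OF x] opp abc by metis
  qed
  then consider "card (N x) = 0" | "card (N x) = 1" | "card (N x) = 2" by linarith
  then show ?thesis
  proof cases
    case 1
    then have "x \<in> Vdeg V E 0" "x \<notin> Vdeg V E 1" using x unfolding Vdeg_def by simp_all
    then show ?thesis using z by auto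
  next
    case 2
    then obtain y where leaf: "N x = {y}" using card_1_singletonE by blast
    then have "\<not> opposite z x y" using no by simp
    moreover have "x \<in> Vdeg V E 1" using x leaf unfolding Vdeg_def by simp
    ultimately have "x \<in> interacting_leaves" using leaf_not_on_interacting_stratum[OF x leaf z] z by blast
    moreover have "x \<notin> interacting_points" using 2 card_nbr_V2pi[of x] unfolding Vdeg_def by auto
    ultimately show ?thesis by simp
  next
    case 3
    then obtain a b where ab: "N x = {a, b}" "a \<noteq> b" by (meson card_2_iff)
    then have "x \<in> V2pi \<epsilon> V E" using in_V2pi_iff[OF x ab] opp by simp
    moreover have "x \<notin> Vdeg V E 1" using 3 unfolding Vdeg_def by auto
    ultimately show ?thesis using z by auto
  qed
qed

lemma card_substrate_nbr_at_vertex: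
  assumes x: "x \<in> V"
  shows "card (N_sub x) = card {y \<in> N x. anchored x y} + (if x \<in> interacting_points then 1 else 0)
     + (if x \<in> interacting_leaves then 1 else 0)"
proof (cases "N_sub x = {}")
  case True
  then show ?thesis unfolding anchored_def by simp
next
  case False
  then obtain z where z: "z \<in> N_sub x" by blast
  have sub: "N_sub x = {z}" using substrate_nbr_unique[OF x z] z by blast
  show ?thesis
  proof (cases "\<exists>y \<in> N x. opposite z x y")
    case True
    then obtain y where "y \<in> N x" "opposite z x y" by blast
    from card_substrate_nbr_at_anchored_vertex[OF x z this] show ?thesis using sub by simp
  next
    case False
    then have "{y \<in> N x. anchored x y} = {}" unfolding anchored_def sub by auto
    then have "card {y \<in> N x. anchored x y} = 0" by (simp only: card.empty)
    with unanchored_vertex_interacting_singleton[OF x z] False show ?thesis using sub by simp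
  qed
qed

lemma sum_card_substrate_nbr:
  "(\<Sum>x\<in>V. card (N_sub x)) = card interacting_strata + card interacting_points + card interacting_leaves"
proof -
  have ind: "(\<Sum>x\<in>V. if x \<in> A then 1 else 0) = card A" if "A \<subseteq> V" for A :: "complex set"
    using finite_V that by (simp add: sum.If_cases Int_absorb1)
  have "interacting_points \<subseteq> V" "interacting_leaves \<subseteq> V" unfolding Vdeg_def V2pi_def by auto
  note ind = ind[OF this(1)] ind[OF this(2)]
  have "(\<Sum>x\<in>V. card (N_sub x)) = (\<Sum>x\<in>V. card {y \<in> N x. anchored x y}
      + (if x \<in> interacting_points then 1 else 0) + (if x \<in> interacting_leaves then 1 else 0))"
    using card_substrate_nbr_at_vertex by (rule sum.cong[OF refl])
  also have "\<dots> = (\<Sum>x\<in>V. card {y \<in> N x. anchored x y})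
      + (\<Sum>x\<in>V. if x \<in> interacting_points then 1 else 0) + (\<Sum>x\<in>V. if x \<in> interacting_leaves then 1 else 0)"
    by (simp only: sum.distrib)
  finally show ?thesis by (simp only: ind card_interacting_strata)
qed

lemma size_strata:
  "size (strata \<epsilon> V E) = card (S_Gamma \<epsilon> V E) + 2 * card (Vdeg V E 0) + card (Vdeg V E 1 \<union> V2pi \<epsilon> V E)"
  unfolding strata_def by simp

lemma size_strata_int:
  "size (strata_int \<epsilon> r0 V E) = card interacting_strata + card interacting_points + card interacting_leaves"
  unfolding strata_int_def by simp

lemma strata_int_subset: "strata_int \<epsilon> r0 V E \<subseteq># strata \<epsilon> V E"
proof -
  let ?u = "\<lambda>A. image_mset (\<lambda>x. upath [x]) (mset_set A)"
  let ?V0 = "Vdeg V E 0" and ?V12 = "Vdeg V E 1 \<union> V2pi \<epsilon> V E"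
  have fin: "finite ?V0" "finite ?V12" "finite interacting_points" "finite interacting_leaves"
    using finite_Vdeg finite_V2pi by auto
  have "interacting_points \<union> interacting_leaves \<subseteq> ?V0 \<union> ?V12" by auto
  then have "mset_set (interacting_points \<union> interacting_leaves) \<subseteq># mset_set (?V0 \<union> ?V12)"
    using fin by simp
  moreover have "interacting_points \<inter> interacting_leaves = {}" "?V0 \<inter> ?V12 = {}"
    unfolding V2pi_def Vdeg_def by auto
  ultimately have "mset_set interacting_points + mset_set interacting_leaves \<subseteq># mset_set ?V0 + mset_set ?V12"
    using fin by (simp add: mset_set_Union)
  then have "?u interacting_points + ?u interacting_leaves \<subseteq># ?u ?V0 + ?u ?V12"
    using image_mset_subseteq_mono by fastforce
  also have "\<dots> \<subseteq># ?u ?V0 + ?u ?V0 + ?u ?V12" by simp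
  finally have "?u interacting_points + ?u interacting_leaves \<subseteq># ?u ?V0 + ?u ?V0 + ?u ?V12" .
  with subset_mset.add_mono[of "mset_set interacting_strata" "mset_set (S_Gamma \<epsilon> V E)"]
  have "mset_set interacting_strata + (?u interacting_points + ?u interacting_leaves)
      \<subseteq># mset_set (S_Gamma \<epsilon> V E) + (?u ?V0 + ?u ?V0 + ?u ?V12)"
    using finite_S_Gamma by simp
  then show ?thesis unfolding strata_int_def strata_def by (simp only: add.assoc)
qed

lemma sum_slen_S_Gamma:
  "(\<Sum>s\<in>S_Gamma \<epsilon> V E. slen s) + 2 * card (Vdeg V E 0) + card (Vdeg V E 1 \<union> V2pi \<epsilon> V E) = 2 * card V"
proof -
  have "(\<Sum>s \<in># image_mset (\<lambda>x. upath [x]) (mset_set A). slen s) = card A" for A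
    by (induction A rule: infinite_finite_induct) (simp_all add: slen_upath)
  then show ?thesis using sum_slen_strata unfolding strata_def by (simp add: sum_unfold_sum_mset)
qed

lemma F_bond_eq:
  "F_bond \<beta> r0 V E = 2 * (1 - \<beta>) * real (size (strata_int \<epsilon> r0 V E)) + 2 * real (size (strata_no \<epsilon> r0 V E))"
proof -
  let ?SG = "S_Gamma \<epsilon> V E"
  have "real (2 * (slen s - 1)) = 2 * real (slen s) - 2" if s: "s \<in> ?SG" for s
  proof -
    obtain \<mu> where m: "maximal \<mu>" and "s = upath \<mu>" using s unfolding S_Gamma_iff by blast
    then have "1 \<le> slen s" using straight_length[OF maximal_straight[OF m]] by (simp add: slen_upath)
    then show ?thesis by (simp add: of_nat_diff)
  qed
  then have "real (\<Sum>s\<in>?SG. 2 * (slen s - 1)) = (\<Sum>s\<in>?SG. 2 * real (slen s) - 2)"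
    unfolding of_nat_sum by (rule sum.cong[OF refl])
  then have deg: "(\<Sum>x\<in>V. real (card (N x))) = 2 * real (\<Sum>s\<in>?SG. slen s) - 2 * real (card ?SG)"
    using sum_card_nbr unfolding of_nat_sum[symmetric]
    by (simp add: sum_subtractf sum_distrib_left[symmetric])
  have sub: "(\<Sum>x\<in>V. real (card (N_sub x))) = real (size (strata_int \<epsilon> r0 V E))"
    unfolding of_nat_sum[symmetric] sum_card_substrate_nbr size_strata_int ..
  have no: "real (size (strata_no \<epsilon> r0 V E)) = real (size (strata \<epsilon> V E)) - real (size (strata_int \<epsilon> r0 V E))"
    unfolding strata_no_def using size_Diff_submset[OF strata_int_subset] size_mset_mono[OF strata_int_subset]
    by (simp add: of_nat_diff)
  have "F_bond \<beta> r0 V E = 4 * real (card V) - (\<Sum>x\<in>V. real (card (N x)))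
      - 2 * \<beta> * (\<Sum>x\<in>V. real (card (N_sub x)))"
    unfolding F_bond_def by (simp add: sum_subtractf sum_distrib_left)
  also have "\<dots> = 2 * real (size (strata \<epsilon> V E)) - 2 * \<beta> * real (size (strata_int \<epsilon> r0 V E))"
    using arg_cong[OF sum_slen_S_Gamma, of real] unfolding deg sub size_strata by simp
  finally show ?thesis unfolding no by (simp add: algebra_simps)
qed

end

theorem lemma3p7:
  fixes \<epsilon> \<beta> r0 :: real and V :: "complex set" and E :: "complex set set"
  assumes beta: "\<beta> > 0"
    and r0: "1 < r0" "r0 < sqrt 2"
    and eps: "0 < \<epsilon>" "\<epsilon> \<le> pi / 39"
    and finV: "finite V"
    and upper: "\<forall>x \<in> V. Im x > 0"
    and graph: "E \<subseteq> {{x, y} | x y. x \<in> V \<and> y \<in> V \<and> x \<noteq> y}"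
    and reg: "regular \<epsilon> r0 V E"
    and excess: "\<forall>\<gamma> \<in> Gamma \<epsilon> V E. angle_excess \<gamma> < pi / 10 - 7 / 5 * \<epsilon>"
  shows "((\<Sum>s \<in># strata \<epsilon> V E. slen s) = 2 * card V) \<and>
         F_bond \<beta> r0 V E = 2 * (1 - \<beta>) * real (size (strata_int \<epsilon> r0 V E))
                            + 2 * real (size (strata_no \<epsilon> r0 V E)) \<and>
         (\<forall>x \<in> V. \<exists>s s'. filter_mset (\<lambda>t. x \<in> spts t) (strata \<epsilon> V E) = {#s, s'#}
                        \<and> s' \<in># strata_perp \<epsilon> V E s)"
proof -
  interpret small_excess_graph \<epsilon> r0 V E
    using eps finV upper graph reg excess by unfold_locales
  show ?thesis using sum_slen_strata F_bond_eq two_strata_at_vertex by blast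
qed

end
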